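(* Consider the setting described in the context, with an arbitrary admissible triggering policy. For every $k\in\mathcal{K}$, the conditional mean $\mathbb{E}[x_k\mid\mathcal{I}^c_k]$ is the minimum mean-square-error estimator of $x_k$ given $\mathcal{I}^c_k$, and it satisfies $\mathbb{E}[x_0\mid\mathcal{I}^c_0]=m_0$ and $$\mathbb{E}[x_{k+1}\mid\mathcal{I}^c_{k+1}]=\begin{cases}A^{\zeta_k+1}x_{k-\zeta_k}+\sum_{t=0}^{\zeta_k}A^tBu_{k-t}, & \text{if }\delta_k=1,\\ A\,\mathbb{E}[x_k\mid\mathcal{I}^c_k]+Bu_k+\imath_k, & \text{otherwise,}\end{cases}$$ where $\imath_k=A\big(\mathbb{E}[x_k\mid\mathcal{I}^c_k,\delta_k=0]-\mathbb{E}[x_k\mid\mathcal{I}^c_k]\big)$ (the signaling residual).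
   Context: Let $n,m\ge 1$, $N\in\mathbb{N}$, and $\mathcal{K}=\{0,1,\dots,N\}$. A process evolves as $x_{k+1}=Ax_k+Bu_k+w_k$ with output $y_k=x_{k-\tau_k}$ for $k\in\mathcal{K}$, where $A\in\mathbb{R}^{n\times n}$, $B\in\mathbb{R}^{n\times m}$, $u_k\in\mathbb{R}^m$ is the control input chosen by a controller based on its information, $w_k\in\mathbb{R}^n$ is Gaussian white noise with zero mean and covariance $W\succ 0$, $x_0$ is Gaussian with mean $m_0$ and covariance $M_0$, and $\tau_k\in\mathbb{N}_0$ is a random processing delay with known distribution, with $\tau_0=0$; $x_0$, the $w_k$ and the $\tau_k$ are mutually independent. At each time an event trigger chooses $\delta_k\in\{0,1\}$; if $\delta_k=1$ the freshest observation available at the trigger is transmitted and received by the controller at time $k+1$, otherwise nothing is received. The age of information at the event trigger is $\zeta_0=0$ and, for $k\ge1$, $\zeta_k=\tau_k$ if $\tau_k<\zeta_{k-1}+1$ and $\zeta_k=\zeta_{k-1}+1$ otherwise. The age of information at the controller is $\eta_0=\infty$ and, for $k\ge1$, $\eta_k=\zeta_{k-1}+1$ if $\delta_{k-1}=1$ and $\eta_k=\eta_{k-1}+1$ otherwise. The information sets are $\mathcal{I}^e_k=\{x_{t-\zeta_t},x_{t-\eta_t},\delta_s,u_s : 0\le t\le k,\ 0\le s<k\}$ (event trigger) and $\mathcal{I}^c_k=\{x_{t-\eta_t},\delta_s,u_s: 0\le t\le k,\ 0\le s<k\}$ (controller), entries with infinite age being void. An admissible triggering policy is a family $\{\mathbb{P}(\delta_k\mid\mathcal{I}^e_k)\}_{k=0}^N$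 of Borel measurable transition kernels. *)

theory Defs
  imports "HOL-Probability.Probability" "HOL-Analysis.Analysis" "HOL-Library.Extended_Nat"
begin

fun mpow :: "real^'n^'n \<Rightarrow> nat \<Rightarrow> real^'n^'n" where
  "mpow A 0 = mat 1"
| "mpow A (Suc t) = A ** mpow A t"

definition psd_mat :: "real^'n^'n \<Rightarrow> bool" where
  "psd_mat C \<longleftrightarrow> transpose C = C \<and> (\<forall>v. 0 \<le> v \<bullet> (C *v v))"

definition pd_mat :: "real^'n^'n \<Rightarrow> bool" where
  "pd_mat C \<longleftrightarrow> transpose C = C \<and> (\<forall>v. v \<noteq> 0 \<longrightarrow> 0 < v \<bullet> (C *v v))"

(* X is a Gaussian random vector with mean mu and covariance C
   (every linear functional v.X is normal with mean v.mu and variance v.(C v);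
    degenerate variance 0 means a point mass) *)
definition gaussian_vec :: "'a measure \<Rightarrow> ('a \<Rightarrow> real^'n) \<Rightarrow> real^'n \<Rightarrow> real^'n^'n \<Rightarrow> bool" where
  "gaussian_vec M X mu C \<longleftrightarrow> psd_mat C \<and> X \<in> borel_measurable M \<and>
     (\<forall>v. distr M borel (\<lambda>\<omega>. v \<bullet> X \<omega>) =
        (if v \<bullet> (C *v v) = 0 then return borel (v \<bullet> mu)
         else density lborel (normal_density (v \<bullet> mu) (sqrt (v \<bullet> (C *v v))))))"

(* age of information at the event trigger: zeta_0 = 0,
   zeta_k = tau_k if tau_k < zeta_{k-1}+1, else zeta_{k-1}+1 *)
fun zeta :: "(nat \<Rightarrow> nat) \<Rightarrow> nat \<Rightarrow> nat" where
  "zeta tau 0 = 0"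
| "zeta tau (Suc k) = (if tau (Suc k) < zeta tau k + 1 then tau (Suc k) else zeta tau k + 1)"

(* age of information at the controller: eta_0 = infinity,
   eta_k = zeta_{k-1}+1 if delta_{k-1} = 1, else eta_{k-1}+1 *)
fun eta :: "(nat \<Rightarrow> nat) \<Rightarrow> (nat \<Rightarrow> bool) \<Rightarrow> nat \<Rightarrow> enat" where
  "eta tau dl 0 = \<infinity>"
| "eta tau dl (Suc k) = (if dl k then enat (zeta tau k + 1) else eta tau dl k + 1)"

definition zeta_rv :: "(nat \<Rightarrow> 'a \<Rightarrow> nat) \<Rightarrow> nat \<Rightarrow> 'a \<Rightarrow> nat" where
  "zeta_rv tau k = (\<lambda>\<omega>. zeta (\<lambda>j. tau j \<omega>) k)"

definition eta_rv :: "(nat \<Rightarrow> 'a \<Rightarrow> nat) \<Rightarrow> (nat \<Rightarrow> 'a \<Rightarrow> bool) \<Rightarrow> nat \<Rightarrow> 'a \<Rightarrow> enat" where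
  "eta_rv tau dl k = (\<lambda>\<omega>. eta (\<lambda>j. tau j \<omega>) (\<lambda>j. dl j \<omega>) k)"

(* observation x_{t - eta_t} held by the controller (void, encoded as 0, if eta_t = infinity;
   the age eta_t itself is a separate generator of the information) *)
definition obs_c :: "(nat \<Rightarrow> 'a \<Rightarrow> real^'n) \<Rightarrow> (nat \<Rightarrow> 'a \<Rightarrow> nat) \<Rightarrow> (nat \<Rightarrow> 'a \<Rightarrow> bool) \<Rightarrow> nat \<Rightarrow> 'a \<Rightarrow> real^'n" where
  "obs_c x tau dl t = (\<lambda>\<omega>. case eta_rv tau dl t \<omega> of enat e \<Rightarrow> x (t - e) \<omega> | \<infinity> \<Rightarrow> 0)"

definition obs_e :: "(nat \<Rightarrow> 'a \<Rightarrow> real^'n) \<Rightarrow> (nat \<Rightarrow> 'a \<Rightarrow> nat) \<Rightarrow> nat \<Rightarrow> 'a \<Rightarrow> real^'n" where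
  "obs_e x tau t = (\<lambda>\<omega>. x (t - zeta_rv tau t \<omega>) \<omega>)"

definition preimgs :: "'a measure \<Rightarrow> ('a \<Rightarrow> 'b) \<Rightarrow> 'b measure \<Rightarrow> 'a set set" where
  "preimgs M X N = {X -` A \<inter> space M | A. A \<in> sets N}"

definition gens_c :: "'a measure \<Rightarrow> (nat \<Rightarrow> 'a \<Rightarrow> real^'n) \<Rightarrow> (nat \<Rightarrow> 'a \<Rightarrow> nat) \<Rightarrow>
    (nat \<Rightarrow> 'a \<Rightarrow> bool) \<Rightarrow> (nat \<Rightarrow> 'a \<Rightarrow> real^'m) \<Rightarrow> nat \<Rightarrow> 'a set set" where
  "gens_c M x tau dl u k =
     (\<Union>t\<in>{..k}. preimgs M (eta_rv tau dl t) (count_space UNIV) \<union> preimgs M (obs_c x tau dl t) borel) \<union>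
     (\<Union>s\<in>{..<k}. preimgs M (dl s) (count_space UNIV) \<union> preimgs M (u s) borel)"

definition gens_e :: "'a measure \<Rightarrow> (nat \<Rightarrow> 'a \<Rightarrow> real^'n) \<Rightarrow> (nat \<Rightarrow> 'a \<Rightarrow> nat) \<Rightarrow>
    (nat \<Rightarrow> 'a \<Rightarrow> bool) \<Rightarrow> (nat \<Rightarrow> 'a \<Rightarrow> real^'m) \<Rightarrow> nat \<Rightarrow> 'a set set" where
  "gens_e M x tau dl u k = gens_c M x tau dl u k \<union>
     (\<Union>t\<in>{..k}. preimgs M (zeta_rv tau t) (count_space UNIV) \<union> preimgs M (obs_e x tau t) borel)"

definition Ic :: "'a measure \<Rightarrow> (nat \<Rightarrow> 'a \<Rightarrow> real^'n) \<Rightarrow> (nat \<Rightarrow> 'a \<Rightarrow> nat) \<Rightarrow>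
    (nat \<Rightarrow> 'a \<Rightarrow> bool) \<Rightarrow> (nat \<Rightarrow> 'a \<Rightarrow> real^'m) \<Rightarrow> nat \<Rightarrow> 'a measure" where
  "Ic M x tau dl u k = sigma (space M) (gens_c M x tau dl u k)"

definition Ic_dl :: "'a measure \<Rightarrow> (nat \<Rightarrow> 'a \<Rightarrow> real^'n) \<Rightarrow> (nat \<Rightarrow> 'a \<Rightarrow> nat) \<Rightarrow>
    (nat \<Rightarrow> 'a \<Rightarrow> bool) \<Rightarrow> (nat \<Rightarrow> 'a \<Rightarrow> real^'m) \<Rightarrow> nat \<Rightarrow> 'a measure" where
  "Ic_dl M x tau dl u k = sigma (space M) (gens_c M x tau dl u k \<union> preimgs M (dl k) (count_space UNIV))"

definition cond_exp_vec :: "'a measure \<Rightarrow> 'a measure \<Rightarrow> ('a \<Rightarrow> real^'n) \<Rightarrow> 'a \<Rightarrow> real^'n" where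
  "cond_exp_vec M F X = (\<lambda>\<omega>. \<chi> i. real_cond_exp M F (\<lambda>\<eta>. X \<eta> $ i) \<omega>)"

(* index set for the mutually independent primitive random variables *)
datatype prim = PX0 | PW nat | PTau nat | PXi nat

end

theory Submission
  imports Defs
begin

(* The conditional mean is the orthogonal projection of x_k onto the square-integrable
   I^c_k-measurable functions, which gives the MMSE property, and I^c_0 is trivial.
   For the recursion, unroll the dynamics over the last zeta_k + 1 steps:
     x_(k+1) = A^(zeta_k+1) x_(k-zeta_k) + sum_(t<=zeta_k) A^t B u_(k-t) + sum_(t<=zeta_k) A^t w_(k-t).
   The key fact is causality: on the event {k - zeta_k <= j}, everything in I^c_(k+1) and I^e_k
   is determined by x_0, w_0, ..., w_(j-1), the delays and the trigger randomisations xi.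
   Hence every noise w_(k-t) with t <= zeta_k is orthogonal to I^c_(k+1): when delta_k = 1 the
   noise sum has conditional mean zero and the other two terms are known to the controller.
   When delta_k = 0 nothing new reaches the controller, so on {delta_k = 0} every set of
   I^c_(k+1) agrees with a set of sigma(I^c_k, delta_k); as w_k is independent of the latter,
   the conditional mean of x_(k+1) there is A E[x_k | I^c_k, delta_k] + B u_k.
   Gaussianity enters only through the first two moments. *)

lemma borel_measurable_vec_nth [measurable (raw)]:
  "f \<in> borel_measurable F \<Longrightarrow> (\<lambda>\<omega>. (f \<omega> :: real^'n) $ i) \<in> borel_measurable F"
  by (rule measurable_compose[OF _ borel_measurable_nth])

lemma borel_measurable_matrix_vector_mult [measurable (raw)]:
  "f \<in> borel_measurable F \<Longrightarrow> (\<lambda>\<omega>. (C::real^'n^'m) *v f \<omega>) \<in> borel_measurable F"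
  by (rule borel_measurable_continuous_on[where f="\<lambda>v. C *v v"])
     (auto intro: linear_continuous_on matrix_vector_mul_bounded_linear)

lemma borel_measurable_vec_lambda:
  assumes "\<And>i. f i \<in> borel_measurable F"
  shows "(\<lambda>\<omega>. (\<chi> i. f i \<omega>) :: real^'n) \<in> borel_measurable F"
proof -
  have "(\<lambda>\<omega>. (\<chi> i. f i \<omega>) \<bullet> b) \<in> borel_measurable F" if "b \<in> Basis" for b :: "real^'n"
  proof -
    from that obtain j where b: "b = axis j 1" by (auto simp: Basis_vec_def)
    have "(\<lambda>\<omega>. (\<chi> i. f i \<omega>) \<bullet> b) = f j"
      by (rule ext) (simp add: b cart_eq_inner_axis[symmetric])
    then show ?thesis using assms by simp
  qed
  then show ?thesis by (subst borel_measurable_euclidean_space) auto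
qed

lemma power2_norm_vec: "(norm (v::real^'n))\<^sup>2 = (\<Sum>l\<in>UNIV. (v $ l)\<^sup>2)"
  unfolding power2_norm_eq_inner inner_vec_def by (simp add: power2_eq_square)

lemma matrix_vector_mult_nth: "((C::real^'k^'l) *v v) $ i = (\<Sum>l\<in>UNIV. C $ i $ l * v $ l)"
  by (simp add: matrix_vector_mult_def)

section \<open>Generated \<sigma>-algebras and traces on events\<close>

lemma preimgs_subset_Pow: "preimgs M f N \<subseteq> Pow (space M)"
  by (auto simp: preimgs_def)

lemma measurable_preimgsI:
  assumes "space F = space M" "preimgs M f N \<subseteq> sets F" "f \<in> space M \<rightarrow> space N"
  shows "f \<in> measurable F N"
  using assms unfolding measurable_def preimgs_def by auto

lemma preimgs_subset_sets:
  assumes "f \<in> measurable F N" "space F = space M"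
  shows "preimgs M f N \<subseteq> sets F"
  using assms unfolding preimgs_def by (auto dest: measurable_sets)

lemma measurable_sigma_preimgsI:
  assumes "preimgs M f N \<subseteq> G" "G \<subseteq> Pow (space M)" "space N = UNIV"
  shows "f \<in> measurable (sigma (space M) G) N"
  by (rule measurable_preimgsI) (use assms in auto)

lemma Int_stable_preimgs: "Int_stable (preimgs M f N)"
  unfolding Int_stable_def preimgs_def
proof safe
  fix A B assume "A \<in> sets N" "B \<in> sets N"
  then show "\<exists>C. f -` A \<inter> space M \<inter> (f -` B \<inter> space M) = f -` C \<inter> space M \<and> C \<in> sets N"
    by (intro exI[where x="A \<inter> B"]) auto
qed

lemma sigma_sets_trivial: "S \<in> sigma_sets \<Omega> G \<Longrightarrow> G \<subseteq> {{}, \<Omega>} \<Longrightarrow> S = {} \<or> S = \<Omega>"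
proof (induction rule: sigma_sets.induct)
  case (Union a)
  then show ?case by (cases "\<exists>i. a i = \<Omega>") auto
qed auto

lemma sigma_sets_Int_in_sets:
  assumes "S \<in> sigma_sets \<Omega> G" "\<And>T. T \<in> G \<Longrightarrow> T \<inter> E \<in> sets F"
    "E \<in> sets F" "space F = \<Omega>"
  shows "S \<inter> E \<in> sets F"
  using assms(1)
proof (induction rule: sigma_sets.induct)
  case (Basic a) then show ?case using assms(2) by auto
next
  case Empty then show ?case by simp
next
  case (Compl a)
  have "(\<Omega> - a) \<inter> E = E - (a \<inter> E)" using sets.sets_into_space[OF assms(3)] assms(4) by auto
  then show ?case using Compl assms(3) by auto
next
  case (Union a)
  have "(\<Union> (range a)) \<inter> E = (\<Union>i. a i \<inter> E)" by auto
  moreover have "(\<Union>i. a i \<inter> E) \<in> sets F" using Union.IH by (intro sets.countable_UN) auto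
  ultimately show ?case by simp
qed

definition measurable_on_event :: "'a measure \<Rightarrow> 'a set \<Rightarrow> ('a \<Rightarrow> 'b) \<Rightarrow> 'b measure \<Rightarrow> bool" where
  "measurable_on_event F E f N \<longleftrightarrow> (\<exists>f' \<in> measurable F N. \<forall>\<omega>\<in>E. f \<omega> = f' \<omega>)"

lemma measurable_on_eventI: "f' \<in> measurable F N \<Longrightarrow> (\<And>\<omega>. \<omega> \<in> E \<Longrightarrow> f \<omega> = f' \<omega>) \<Longrightarrow> measurable_on_event F E f N"
  unfolding measurable_on_event_def by blast

lemma measurable_on_event_space:
  assumes "measurable_on_event F (space F) f N"
  shows "f \<in> measurable F N"
proof -
  from assms obtain f' where f': "f' \<in> measurable F N" "\<And>\<omega>. \<omega> \<in> space F \<Longrightarrow> f \<omega> = f' \<omega>"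
    unfolding measurable_on_event_def by blast
  have "f \<in> measurable F N \<longleftrightarrow> f' \<in> measurable F N"
    by (rule measurable_cong) (simp add: f'(2))
  then show ?thesis using f'(1) by blast
qed

lemma measurable_on_event_preimgs_Int:
  assumes "measurable_on_event F E f N" "E \<in> sets F" "space F = space M" and S: "S \<in> preimgs M f N"
  shows "S \<inter> E \<in> sets F"
proof -
  obtain A where A: "A \<in> sets N" "S = f -` A \<inter> space M" using S unfolding preimgs_def by blast
  from assms(1) obtain f' where f': "f' \<in> measurable F N" "\<And>\<omega>. \<omega> \<in> E \<Longrightarrow> f \<omega> = f' \<omega>"
    unfolding measurable_on_event_def by blast
  have E: "E \<subseteq> space M" using sets.sets_into_space[OF assms(2)] assms(3) by simp
  have "S \<inter> E = (f' -` A \<inter> space F) \<inter> E" using A(2) E f'(2) assms(3) by auto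
  moreover have "f' -` A \<inter> space F \<in> sets F" using f'(1) A(1) by (rule measurable_sets)
  ultimately show ?thesis using assms(2) by simp
qed

lemma measurable_on_event_iff_preimgs:
  assumes "E \<in> sets F" "space F = space M" "space N = UNIV"
  shows "measurable_on_event F E f N \<longleftrightarrow> (\<forall>S \<in> preimgs M f N. S \<inter> E \<in> sets F)"
proof
  assume "measurable_on_event F E f N"
  then show "\<forall>S \<in> preimgs M f N. S \<inter> E \<in> sets F"
    using measurable_on_event_preimgs_Int assms(1,2) by blast
next
  assume pre: "\<forall>S \<in> preimgs M f N. S \<inter> E \<in> sets F"
  have E: "E \<subseteq> space M" using sets.sets_into_space[OF assms(1)] assms(2) by simp
  define f' where "f' = (\<lambda>\<omega>. if \<omega> \<in> E then f \<omega> else undefined)"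
  have "f' -` A \<inter> space F \<in> sets F" if A: "A \<in> sets N" for A
  proof -
    have S: "(f -` A \<inter> space M) \<inter> E \<in> sets F" using pre A unfolding preimgs_def by blast
    show ?thesis
    proof (cases "undefined \<in> A")
      case True
      then have "f' -` A \<inter> space F = ((f -` A \<inter> space M) \<inter> E) \<union> (space F - E)"
        using E assms(2) unfolding f'_def by (auto split: if_splits)
      then show ?thesis using S assms(1) by simp
    next
      case False
      then have "f' -` A \<inter> space F = (f -` A \<inter> space M) \<inter> E"
        using E assms(2) unfolding f'_def by (auto split: if_splits)
      then show ?thesis using S by simp
    qed
  qed
  then have "f' \<in> measurable F N" using assms(3) unfolding measurable_def by auto
  then show "measurable_on_event F E f N" by (rule measurable_on_eventI) (simp add: f'_def)
qed

section \<open>Square-integrable random variables\<close>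

definition square_integrable :: "'a measure \<Rightarrow> ('a \<Rightarrow> real) \<Rightarrow> bool" where
  "square_integrable M f \<longleftrightarrow> f \<in> borel_measurable M \<and> integrable M (\<lambda>\<omega>. (f \<omega>)\<^sup>2)"

definition square_integrable_vec :: "'a measure \<Rightarrow> ('a \<Rightarrow> real^'k) \<Rightarrow> bool" where
  "square_integrable_vec M X \<longleftrightarrow> (\<forall>i. square_integrable M (\<lambda>\<omega>. X \<omega> $ i))"

lemma integrable_mult_if_square_integrable:
  assumes f: "square_integrable M f" and g: "square_integrable M g"
  shows "integrable M (\<lambda>\<omega>. f \<omega> * g \<omega>)"
proof -
  have [measurable]: "f \<in> borel_measurable M" "g \<in> borel_measurable M"
    using f g unfolding square_integrable_def by auto
  have int: "integrable M (\<lambda>\<omega>. (f \<omega>)\<^sup>2 + (g \<omega>)\<^sup>2)"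
    using f g unfolding square_integrable_def by auto
  have bound: "norm (f \<omega> * g \<omega>) \<le> norm ((f \<omega>)\<^sup>2 + (g \<omega>)\<^sup>2)" for \<omega>
  proof -
    have "2 * \<bar>f \<omega>\<bar> * \<bar>g \<omega>\<bar> \<le> (f \<omega>)\<^sup>2 + (g \<omega>)\<^sup>2"
      using zero_le_power2[of "\<bar>f \<omega>\<bar> - \<bar>g \<omega>\<bar>"] by (simp add: power2_eq_square algebra_simps)
    moreover have "0 \<le> \<bar>f \<omega>\<bar> * \<bar>g \<omega>\<bar>" by simp
    ultimately have "\<bar>f \<omega>\<bar> * \<bar>g \<omega>\<bar> \<le> (f \<omega>)\<^sup>2 + (g \<omega>)\<^sup>2" by linarith
    then show ?thesis by (simp add: abs_mult)
  qed
  show ?thesis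
    by (intro Bochner_Integration.integrable_bound[OF int]) (measurable, rule AE_I2[OF bound])
qed

lemma (in finite_measure) integrable_if_square_integrable:
  "square_integrable M f \<Longrightarrow> integrable M f"
  unfolding square_integrable_def using square_integrable_imp_integrable by blast

lemma square_integrable_add:
  assumes f: "square_integrable M f" and g: "square_integrable M g"
  shows "square_integrable M (\<lambda>\<omega>. f \<omega> + g \<omega>)"
proof -
  have [measurable]: "f \<in> borel_measurable M" "g \<in> borel_measurable M"
    using f g unfolding square_integrable_def by auto
  have "integrable M (\<lambda>\<omega>. (f \<omega>)\<^sup>2 + (g \<omega>)\<^sup>2 + 2 * (f \<omega> * g \<omega>))"
    using f g integrable_mult_if_square_integrable[OF f g] unfolding square_integrable_def by auto
  moreover have "(\<lambda>\<omega>. (f \<omega> + g \<omega>)\<^sup>2) = (\<lambda>\<omega>. (f \<omega>)\<^sup>2 + (g \<omega>)\<^sup>2 + 2 * (f \<omega> * g \<omega>))"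
    by (simp add: power2_eq_square algebra_simps)
  ultimately show ?thesis unfolding square_integrable_def by simp
qed

lemma square_integrable_cmult:
  assumes "square_integrable M f"
  shows "square_integrable M (\<lambda>\<omega>. c * f \<omega>)"
proof -
  have [measurable]: "f \<in> borel_measurable M" using assms unfolding square_integrable_def by simp
  show ?thesis using assms unfolding square_integrable_def by (simp add: power_mult_distrib)
qed

lemma square_integrable_minus: "square_integrable M f \<Longrightarrow> square_integrable M (\<lambda>\<omega>. - f \<omega>)"
  unfolding square_integrable_def by simp

lemma square_integrable_diff:
  "square_integrable M f \<Longrightarrow> square_integrable M g \<Longrightarrow> square_integrable M (\<lambda>\<omega>. f \<omega> - g \<omega>)"
  using square_integrable_add[of M f "\<lambda>\<omega>. - g \<omega>"] square_integrable_minus[of M g] by simp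

lemma square_integrable_sum:
  "(\<And>i. i \<in> I \<Longrightarrow> square_integrable M (f i)) \<Longrightarrow> square_integrable M (\<lambda>\<omega>. \<Sum>i\<in>I. f i \<omega>)"
proof (induction I rule: infinite_finite_induct)
  case (insert a I)
  then show ?case using square_integrable_add[of M "f a" "\<lambda>\<omega>. \<Sum>i\<in>I. f i \<omega>"] by simp
qed (simp_all add: square_integrable_def)

lemma square_integrable_cong:
  assumes "\<And>\<omega>. \<omega> \<in> space M \<Longrightarrow> f \<omega> = g \<omega>"
  shows "square_integrable M f \<longleftrightarrow> square_integrable M g"
proof -
  have "f \<in> borel_measurable M \<longleftrightarrow> g \<in> borel_measurable M" by (rule measurable_cong) (simp add: assms)
  moreover have "integrable M (\<lambda>\<omega>. (f \<omega>)\<^sup>2) \<longleftrightarrow> integrable M (\<lambda>\<omega>. (g \<omega>)\<^sup>2)"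
    by (rule Bochner_Integration.integrable_cong) (simp_all add: assms)
  ultimately show ?thesis unfolding square_integrable_def by simp
qed

lemma square_integrable_vec_matrix_vector_mult:
  "square_integrable_vec M X \<Longrightarrow> square_integrable_vec M (\<lambda>\<omega>. (C::real^'k^'l) *v X \<omega>)"
  unfolding square_integrable_vec_def matrix_vector_mult_def
  by (auto intro!: square_integrable_sum square_integrable_cmult)

lemma square_integrable_vec_add:
  "square_integrable_vec M X \<Longrightarrow> square_integrable_vec M Y \<Longrightarrow> square_integrable_vec M (\<lambda>\<omega>. X \<omega> + Y \<omega>)"
  unfolding square_integrable_vec_def by (auto intro!: square_integrable_add)

lemma (in prob_space) normal_or_point_mass_moments:
  fixes Y :: "'a \<Rightarrow> real"
  assumes [measurable]: "Y \<in> borel_measurable M" and "s \<ge> 0"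
    and DY: "distr M borel Y = (if s = 0 then return borel \<mu> else density lborel (normal_density \<mu> (sqrt s)))"
  shows "integrable M (\<lambda>\<omega>. (Y \<omega>)\<^sup>2) \<and> expectation Y = \<mu>"
proof (cases "s = 0")
  case True
  then have DY0: "distr M borel Y = return borel \<mu>" using DY by simp
  have "AE y in distr M borel Y. y = \<mu>" unfolding DY0 by (subst AE_return) auto
  then have Y_const: "AE \<omega> in M. Y \<omega> = \<mu>" by (subst (asm) AE_distr_iff) auto
  have "integrable M (\<lambda>\<omega>. (Y \<omega>)\<^sup>2)"
    by (rule integrable_cong_AE_imp[of _ "\<lambda>\<omega>. \<mu>\<^sup>2"]) (use Y_const in auto)
  moreover have "expectation Y = (\<integral>\<omega>. \<mu> \<partial>M)"
    by (rule integral_cong_AE) (use Y_const in auto)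
  ultimately show ?thesis by (simp add: prob_space)
next
  case False
  then have sp: "0 < sqrt s" using \<open>s \<ge> 0\<close> by simp
  have "distr M lborel Y = distr M borel Y" by (rule distr_cong) auto
  then have dist: "distributed M lborel Y (normal_density \<mu> (sqrt s))"
    unfolding distributed_def using DY False by auto
  \<comment> \<open>y^2 = (y - \<mu>)^2 + 2 \<mu> y - \<mu>^2, and each term is integrable against the density.\<close>
  have "integrable lborel (\<lambda>y. normal_density \<mu> (sqrt s) y * (y - \<mu>)^2
      + 2 * \<mu> * (normal_density \<mu> (sqrt s) y * y) - \<mu>\<^sup>2 * normal_density \<mu> (sqrt s) y)"
    using integrable_normal_moment[OF sp, of \<mu> 2] integrable_normal_moment_nz_1[OF sp, of \<mu>]
      integrable_normal_density[OF sp, of \<mu>]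
    by (intro Bochner_Integration.integrable_diff Bochner_Integration.integrable_add
        Bochner_Integration.integrable_mult_right) auto
  moreover have "\<And>y. normal_density \<mu> (sqrt s) y * (y - \<mu>)^2
      + 2 * \<mu> * (normal_density \<mu> (sqrt s) y * y) - \<mu>\<^sup>2 * normal_density \<mu> (sqrt s) y
      = normal_density \<mu> (sqrt s) y * y\<^sup>2"
    by (simp add: power2_eq_square algebra_simps)
  ultimately have "integrable lborel (\<lambda>y. normal_density \<mu> (sqrt s) y * y\<^sup>2)" by simp
  then have "integrable M (\<lambda>\<omega>. (Y \<omega>)\<^sup>2)"
    using distributed_integrable[OF dist, of "\<lambda>y. y\<^sup>2"] by simp
  moreover have "expectation Y = \<mu>" by (rule normal_distributed_expectation[OF sp dist])
  ultimately show ?thesis by simp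
qed

lemma gaussian_vec_moments:
  fixes X :: "'a \<Rightarrow> real^'n"
  assumes "prob_space M" and G: "gaussian_vec M X mu C"
  shows "square_integrable_vec M X" "(\<integral>\<omega>. X \<omega> $ i \<partial>M) = mu $ i"
proof -
  interpret prob_space M by fact
  have psd: "psd_mat C" and [measurable]: "X \<in> borel_measurable M"
    and D: "\<And>v. distr M borel (\<lambda>\<omega>. v \<bullet> X \<omega>) =
        (if v \<bullet> (C *v v) = 0 then return borel (v \<bullet> mu)
         else density lborel (normal_density (v \<bullet> mu) (sqrt (v \<bullet> (C *v v)))))"
    using G unfolding gaussian_vec_def by auto
  have "integrable M (\<lambda>\<omega>. (X \<omega> $ i)\<^sup>2) \<and> (\<integral>\<omega>. X \<omega> $ i \<partial>M) = mu $ i" for i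
  proof (rule normal_or_point_mass_moments)
    define v :: "real^'n" where "v = axis i 1"
    have v_inner: "\<And>y. v \<bullet> y = y $ i" unfolding v_def by (simp add: cart_eq_inner_axis inner_commute)
    show "0 \<le> v \<bullet> (C *v v)" using psd unfolding psd_mat_def by auto
    show "distr M borel (\<lambda>\<omega>. X \<omega> $ i) = (if v \<bullet> (C *v v) = 0 then return borel (mu $ i)
        else density lborel (normal_density (mu $ i) (sqrt (v \<bullet> (C *v v)))))"
      using D[of v] unfolding v_inner .
  qed measurable
  then show "square_integrable_vec M X" "(\<integral>\<omega>. X \<omega> $ i \<partial>M) = mu $ i"
    unfolding square_integrable_vec_def square_integrable_def by auto
qed

lemma integrable_indicator_mult:
  "A \<in> sets M \<Longrightarrow> integrable M f \<Longrightarrow> integrable M (\<lambda>\<omega>. indicator A \<omega> * f \<omega> :: real)"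
  using integrable_real_mult_indicator[of A M f] by (simp add: mult.commute)

section \<open>Conditional expectation\<close>

lemma cond_exp_vec_nth: "cond_exp_vec M F X \<omega> $ l = real_cond_exp M F (\<lambda>\<eta>. X \<eta> $ l) \<omega>"
  unfolding cond_exp_vec_def by simp

lemma borel_measurable_cond_exp_vec: "cond_exp_vec M F X \<in> borel_measurable F"
  unfolding cond_exp_vec_def by (rule borel_measurable_vec_lambda) simp

lemma (in finite_measure) finite_measure_subalgebraI:
  "sets F \<subseteq> sets M \<Longrightarrow> space F = space M \<Longrightarrow> finite_measure_subalgebra M F"
  by (simp add: finite_measure_subalgebra_def finite_measure_subalgebra_axioms_def subalgebra_def
      finite_measure_axioms)

lemma nn_integral_power2_norm_vec:
  assumes "\<And>l. square_integrable M (\<lambda>\<omega>. Y \<omega> $ l)"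
  shows "(\<integral>\<^sup>+\<omega>. ennreal ((norm (Y \<omega> :: real^'n))\<^sup>2) \<partial>M) = ennreal (\<Sum>l\<in>UNIV. \<integral>\<omega>. (Y \<omega> $ l)\<^sup>2 \<partial>M)"
proof -
  have int: "\<And>l. integrable M (\<lambda>\<omega>. (Y \<omega> $ l)\<^sup>2)" using assms unfolding square_integrable_def by auto
  have "(\<integral>\<^sup>+\<omega>. ennreal ((norm (Y \<omega>))\<^sup>2) \<partial>M) = ennreal (\<integral>\<omega>. (\<Sum>l\<in>UNIV. (Y \<omega> $ l)\<^sup>2) \<partial>M)"
    unfolding power2_norm_vec by (rule nn_integral_eq_integral) (use int in \<open>auto intro!: sum_nonneg\<close>)
  also have "\<dots> = ennreal (\<Sum>l\<in>UNIV. \<integral>\<omega>. (Y \<omega> $ l)\<^sup>2 \<partial>M)"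
    using int by simp
  finally show ?thesis .
qed

lemma square_integrable_nth_if_nn_integral_finite:
  fixes Y :: "'a \<Rightarrow> real^'n"
  assumes [measurable]: "Y \<in> borel_measurable M" and fin: "(\<integral>\<^sup>+\<omega>. ennreal ((norm (Y \<omega>))\<^sup>2) \<partial>M) < \<infinity>"
  shows "square_integrable M (\<lambda>\<omega>. Y \<omega> $ l)"
proof -
  have "(\<integral>\<^sup>+\<omega>. norm ((Y \<omega> $ l)\<^sup>2) \<partial>M) \<le> (\<integral>\<^sup>+\<omega>. ennreal ((norm (Y \<omega>))\<^sup>2) \<partial>M)"
  proof (rule nn_integral_mono)
    fix \<omega>
    have "(Y \<omega> $ l)\<^sup>2 \<le> (\<Sum>l\<in>UNIV. (Y \<omega> $ l)\<^sup>2)" by (rule member_le_sum) auto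
    then show "ennreal (norm ((Y \<omega> $ l)\<^sup>2)) \<le> ennreal ((norm (Y \<omega>))\<^sup>2)"
      unfolding power2_norm_vec by (intro ennreal_leI) simp
  qed
  also have "\<dots> < \<infinity>" by (rule fin)
  finally have "integrable M (\<lambda>\<omega>. (Y \<omega> $ l)\<^sup>2)" by (intro integrableI_bounded) auto
  then show ?thesis unfolding square_integrable_def by auto
qed

context finite_measure_subalgebra
begin

lemma square_integrable_real_cond_exp:
  assumes f: "square_integrable M f"
  shows "square_integrable M (real_cond_exp M F f)"
proof -
  have [measurable]: "f \<in> borel_measurable M" and f2: "integrable M (\<lambda>\<omega>. (f \<omega>)\<^sup>2)"
    using f unfolding square_integrable_def by auto
  have "integrable M f"
    by (rule square_integrable_imp_integrable) (use f2 in auto)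
  then have "AE \<omega> in M. (real_cond_exp M F f \<omega>)\<^sup>2 \<le> real_cond_exp M F (\<lambda>\<omega>. (f \<omega>)\<^sup>2) \<omega>"
    using real_cond_exp_jensens_inequality(2)[of f UNIV 0 0 power2] f2 convex_power2 by auto
  then have "integrable M (\<lambda>\<omega>. (real_cond_exp M F f \<omega>)\<^sup>2)"
    by (intro Bochner_Integration.integrable_bound[OF real_cond_exp_int(1)[OF f2]]) auto
  then show ?thesis unfolding square_integrable_def by simp
qed

lemma real_cond_exp_least_squares:
  assumes X: "square_integrable M X" and g: "square_integrable M g" "g \<in> borel_measurable F"
  shows "(\<integral>\<omega>. (X \<omega> - real_cond_exp M F X \<omega>)\<^sup>2 \<partial>M) \<le> (\<integral>\<omega>. (X \<omega> - g \<omega>)\<^sup>2 \<partial>M)"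
proof -
  define c where "c = real_cond_exp M F X"
  have c: "square_integrable M c" unfolding c_def by (rule square_integrable_real_cond_exp[OF X])
  have Xc: "square_integrable M (\<lambda>\<omega>. X \<omega> - c \<omega>)" by (rule square_integrable_diff[OF X c])
  have cg: "square_integrable M (\<lambda>\<omega>. c \<omega> - g \<omega>)" by (rule square_integrable_diff[OF c g(1)])
  have [measurable]: "g \<in> borel_measurable F" "X \<in> borel_measurable M" using g X by (auto simp: square_integrable_def)
  have cF[measurable]: "c \<in> borel_measurable F" unfolding c_def by simp
  have "(\<integral>\<omega>. (c \<omega> - g \<omega>) * c \<omega> \<partial>M) = (\<integral>\<omega>. (c \<omega> - g \<omega>) * X \<omega> \<partial>M)"
    unfolding c_def
    by (rule real_cond_exp_intg(2)) (use integrable_mult_if_square_integrable[OF cg X] in \<open>auto simp: c_def\<close>)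
  moreover have "(\<integral>\<omega>. (X \<omega> - c \<omega>) * (c \<omega> - g \<omega>) \<partial>M)
      = (\<integral>\<omega>. (c \<omega> - g \<omega>) * X \<omega> - (c \<omega> - g \<omega>) * c \<omega> \<partial>M)"
    by (rule Bochner_Integration.integral_cong) (auto simp: algebra_simps)
  ultimately have cross: "(\<integral>\<omega>. (X \<omega> - c \<omega>) * (c \<omega> - g \<omega>) \<partial>M) = 0"
    using integrable_mult_if_square_integrable[OF cg X] integrable_mult_if_square_integrable[OF cg c]
    by simp
  have "(\<integral>\<omega>. (X \<omega> - g \<omega>)\<^sup>2 \<partial>M) = (\<integral>\<omega>. (X \<omega> - c \<omega>)\<^sup>2 + (c \<omega> - g \<omega>)\<^sup>2
       + 2 * ((X \<omega> - c \<omega>) * (c \<omega> - g \<omega>)) \<partial>M)"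
    by (rule Bochner_Integration.integral_cong) (auto simp: power2_eq_square algebra_simps)
  also have "\<dots> = (\<integral>\<omega>. (X \<omega> - c \<omega>)\<^sup>2 \<partial>M) + (\<integral>\<omega>. (c \<omega> - g \<omega>)\<^sup>2 \<partial>M)"
    using Xc cg integrable_mult_if_square_integrable[OF Xc cg] cross
    by (simp add: square_integrable_def)
  also have "\<dots> \<ge> (\<integral>\<omega>. (X \<omega> - c \<omega>)\<^sup>2 \<partial>M)" by simp
  finally show ?thesis unfolding c_def .
qed

lemma cond_exp_vec_least_squares:
  fixes X :: "'a \<Rightarrow> real^'n"
  assumes X: "square_integrable_vec M X" and g: "g \<in> borel_measurable F"
  shows "(\<integral>\<^sup>+\<omega>. ennreal ((norm (X \<omega> - cond_exp_vec M F X \<omega>))\<^sup>2) \<partial>M)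
           \<le> (\<integral>\<^sup>+\<omega>. ennreal ((norm (X \<omega> - g \<omega>))\<^sup>2) \<partial>M)"
proof (cases "(\<integral>\<^sup>+\<omega>. ennreal ((norm (X \<omega> - g \<omega>))\<^sup>2) \<partial>M) = \<infinity>")
  case False
  define c where "c = cond_exp_vec M F X"
  have [measurable]: "g \<in> borel_measurable F" "g \<in> borel_measurable M"
    using g measurable_from_subalg[OF subalg g] by auto
  have Xl: "square_integrable M (\<lambda>\<omega>. X \<omega> $ l)" for l using X unfolding square_integrable_vec_def by auto
  have "(\<lambda>\<omega>. \<chi> i. X \<omega> $ i) \<in> borel_measurable M"
    by (rule borel_measurable_vec_lambda) (use Xl in \<open>simp add: square_integrable_def\<close>)
  then have [measurable]: "X \<in> borel_measurable M" by simp
  have "(\<lambda>\<omega>. X \<omega> - g \<omega>) \<in> borel_measurable M" by measurable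
  then have Xg: "square_integrable M (\<lambda>\<omega>. X \<omega> $ l - g \<omega> $ l)" for l
    using square_integrable_nth_if_nn_integral_finite[of "\<lambda>\<omega>. X \<omega> - g \<omega>" M l] False
    by (simp add: less_top)
  have gl: "square_integrable M (\<lambda>\<omega>. g \<omega> $ l)" for l
    using square_integrable_diff[OF Xl Xg, of l l] by simp
  have cl: "square_integrable M (\<lambda>\<omega>. c \<omega> $ l)" for l
    unfolding c_def cond_exp_vec_nth by (rule square_integrable_real_cond_exp[OF Xl])
  have "(\<integral>\<^sup>+\<omega>. ennreal ((norm (X \<omega> - c \<omega>))\<^sup>2) \<partial>M) = ennreal (\<Sum>l\<in>UNIV. \<integral>\<omega>. (X \<omega> $ l - c \<omega> $ l)\<^sup>2 \<partial>M)"
    using nn_integral_power2_norm_vec[of M "\<lambda>\<omega>. X \<omega> - c \<omega>"] square_integrable_diff[OF Xl cl] by simp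
  also have "\<dots> \<le> ennreal (\<Sum>l\<in>UNIV. \<integral>\<omega>. (X \<omega> $ l - g \<omega> $ l)\<^sup>2 \<partial>M)"
  proof (intro ennreal_leI sum_mono)
    fix l
    show "(\<integral>\<omega>. (X \<omega> $ l - c \<omega> $ l)\<^sup>2 \<partial>M) \<le> (\<integral>\<omega>. (X \<omega> $ l - g \<omega> $ l)\<^sup>2 \<partial>M)"
      unfolding c_def cond_exp_vec_nth by (rule real_cond_exp_least_squares[OF Xl gl]) measurable
  qed
  also have "\<dots> = (\<integral>\<^sup>+\<omega>. ennreal ((norm (X \<omega> - g \<omega>))\<^sup>2) \<partial>M)"
    using nn_integral_power2_norm_vec[of M "\<lambda>\<omega>. X \<omega> - g \<omega>"] Xg by simp
  finally show ?thesis unfolding c_def .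
qed simp

end

lemma (in prob_space) real_cond_exp_trivial:
  assumes "sigma_finite_subalgebra M F" and triv: "\<And>A. A \<in> sets F \<Longrightarrow> A = {} \<or> A = space M"
    and X: "integrable M X"
  shows "AE \<omega> in M. real_cond_exp M F X \<omega> = expectation X"
proof -
  interpret F: sigma_finite_subalgebra M F by fact
  show ?thesis
  proof (rule F.real_cond_exp_charact)
    fix A assume "A \<in> sets F"
    with triv consider "A = {}" | "A = space M" by blast
    then show "(\<integral>\<omega>\<in>A. X \<omega> \<partial>M) = (\<integral>\<omega>\<in>A. expectation X \<partial>M)"
    proof cases
      case 1 then show ?thesis by (simp add: set_lebesgue_integral_def)
    next
      case 2 then show ?thesis by (simp add: set_integral_space prob_space X)
    qed
  qed (simp_all add: X)
qed

lemma (in sigma_finite_subalgebra) real_cond_exp_eq_on_event: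
  assumes E: "E \<in> sets F" and X: "integrable M X" and V: "integrable M V"
    and V': "V' \<in> borel_measurable F" "\<And>\<omega>. \<omega> \<in> E \<Longrightarrow> V \<omega> = V' \<omega>"
    and eq: "\<And>G. G \<in> sets F \<Longrightarrow>
      (\<integral>\<omega>. indicator (G \<inter> E) \<omega> * X \<omega> \<partial>M) = (\<integral>\<omega>. indicator (G \<inter> E) \<omega> * V \<omega> \<partial>M)"
  shows "AE \<omega> in M. \<omega> \<in> E \<longrightarrow> real_cond_exp M F X \<omega> = V \<omega>"
proof -
  have EM: "E \<in> sets M" and spF: "space F = space M" using E subalg by (auto simp: subalgebra_def)
  define C where "C = real_cond_exp M F X"
  have CF[measurable]: "C \<in> borel_measurable F" and CM[measurable]: "C \<in> borel_measurable M"
    unfolding C_def by simp_all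
  have Ci: "integrable M C" unfolding C_def by (rule real_cond_exp_int(1)[OF X])
  \<comment> \<open>Patching C with V on E yields another version of C.\<close>
  define Z where "Z = (\<lambda>\<omega>. if \<omega> \<in> E then V' \<omega> else C \<omega>)"
  have ZF: "Z \<in> borel_measurable F"
    unfolding Z_def
    by (rule measurable_If_set[OF V'(1) CF]) (use E spF sets.sets_into_space[OF E] in \<open>simp add: Int_absorb2\<close>)
  have Zeq: "\<And>\<omega>. \<omega> \<in> space M \<Longrightarrow> Z \<omega> = V \<omega> * indicator E \<omega> + C \<omega> * indicator (space M - E) \<omega>"
    unfolding Z_def using V'(2) by (auto split: split_indicator)
  have "integrable M (\<lambda>\<omega>. V \<omega> * indicator E \<omega> + C \<omega> * indicator (space M - E) \<omega>)"
    using EM V Ci by (intro Bochner_Integration.integrable_add integrable_real_mult_indicator) auto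
  then have Zi: "integrable M Z" using Zeq by (subst Bochner_Integration.integrable_cong[OF refl]) auto
  have "AE \<omega> in M. C \<omega> = Z \<omega>"
    unfolding C_def
  proof (rule real_cond_exp_charact[OF _ X Zi ZF])
    fix G assume G: "G \<in> sets F"
    have GM: "G \<in> sets M" using G subalg by (auto simp: subalgebra_def)
    have "(\<integral>\<omega>. indicator (G - E) \<omega> * C \<omega> \<partial>M) = (\<integral>\<omega>. indicator (G - E) \<omega> * X \<omega> \<partial>M)"
      unfolding C_def by (rule real_cond_exp_intg(2)) (use integrable_indicator_mult[OF _ X] GM EM X G E in auto)
    then have "(\<integral>\<omega>. indicator (G \<inter> E) \<omega> * X \<omega> \<partial>M) + (\<integral>\<omega>. indicator (G - E) \<omega> * X \<omega> \<partial>M)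
        = (\<integral>\<omega>. indicator (G \<inter> E) \<omega> * V \<omega> \<partial>M) + (\<integral>\<omega>. indicator (G - E) \<omega> * C \<omega> \<partial>M)"
      using eq[OF G] by simp
    moreover have "(\<integral>\<omega>\<in>G. X \<omega> \<partial>M)
        = (\<integral>\<omega>. indicator (G \<inter> E) \<omega> * X \<omega> + indicator (G - E) \<omega> * X \<omega> \<partial>M)"
      unfolding set_lebesgue_integral_def
      by (rule Bochner_Integration.integral_cong) (auto split: split_indicator)
    moreover have "(\<integral>\<omega>\<in>G. Z \<omega> \<partial>M)
        = (\<integral>\<omega>. indicator (G \<inter> E) \<omega> * V \<omega> + indicator (G - E) \<omega> * C \<omega> \<partial>M)"
      unfolding set_lebesgue_integral_def
      by (rule Bochner_Integration.integral_cong) (auto simp: Zeq split: split_indicator)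
    moreover have "G \<inter> E \<in> sets M" "G - E \<in> sets M" using GM EM by auto
    ultimately show "(\<integral>\<omega>\<in>G. X \<omega> \<partial>M) = (\<integral>\<omega>\<in>G. Z \<omega> \<partial>M)"
      using integrable_indicator_mult[OF _ X] integrable_indicator_mult[OF _ V]
        integrable_indicator_mult[OF _ Ci] by simp
  qed
  then show ?thesis
    by (rule AE_mp[OF _ AE_I2]) (auto simp: Z_def C_def V'(2))
qed

lemma (in prob_space) integral_indicator_mult_indep:
  fixes Y :: "'a \<Rightarrow> real"
  assumes indep: "indep_set (sets F) (sets G)" and F: "subalgebra M F" and G: "subalgebra M G"
    and H: "H \<in> sets F" and Y: "Y \<in> borel_measurable G" "integrable M Y"
  shows "(\<integral>\<omega>. indicator H \<omega> * Y \<omega> \<partial>M) = prob H * expectation Y"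
proof -
  have HM: "H \<in> events" using H F by (auto simp: subalgebra_def)
  have [measurable]: "Y \<in> borel_measurable M" using measurable_from_subalg[OF G Y(1)] .
  have sub: "sigma_sets (space M) {f -` S \<inter> space M |S. S \<in> sets borel} \<subseteq> sets K"
    if K: "subalgebra M K" and f: "f \<in> borel_measurable K" for K and f :: "'a \<Rightarrow> real"
  proof -
    have "{f -` S \<inter> space M |S. S \<in> sets borel} \<subseteq> sets K"
      using measurable_sets[OF f] K by (auto simp: subalgebra_def)
    then have "sigma_sets (space K) {f -` S \<inter> space M |S. S \<in> sets borel} \<subseteq> sets K"
      by (rule sets.sigma_sets_subset)
    then show ?thesis using K by (simp add: subalgebra_def)
  qed
  have "indep_var borel (indicator H) borel Y"
    unfolding indep_var_eq
  proof (intro conjI)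
    show "random_variable borel (indicator H :: 'a \<Rightarrow> real)" using HM by measurable
    show "random_variable borel Y" by measurable
    have "(indicator H :: 'a \<Rightarrow> real) \<in> borel_measurable F" using H by simp
    then show "indep_set (sigma_sets (space M) {(indicator H :: 'a \<Rightarrow> real) -` S \<inter> space M |S. S \<in> sets borel})
       (sigma_sets (space M) {Y -` S \<inter> space M |S. S \<in> sets borel})"
      using indep sub[OF F] sub[OF G Y(1)] unfolding indep_set_def
      by (elim indep_sets_mono_sets) (auto split: bool.split)
  qed
  moreover have "integrable M (indicator H :: 'a \<Rightarrow> real)"
    using HM by (intro integrable_real_indicator) (auto simp: emeasure_eq_measure)
  moreover have "H \<inter> space M = H" using HM sets.sets_into_space by auto
  ultimately show ?thesis using Y(2) by (simp add: indep_var_lebesgue_integral)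
qed

lemma (in sigma_finite_subalgebra) cond_exp_vec_eq_on_event:
  fixes X V :: "'a \<Rightarrow> real^'n"
  assumes E: "E \<in> sets F" and X: "\<And>i. integrable M (\<lambda>\<omega>. X \<omega> $ i)"
    and V: "\<And>i. integrable M (\<lambda>\<omega>. V \<omega> $ i)"
    and V': "V' \<in> borel_measurable F" "\<And>\<omega>. \<omega> \<in> E \<Longrightarrow> V \<omega> = V' \<omega>"
    and eq: "\<And>G i. G \<in> sets F \<Longrightarrow>
      (\<integral>\<omega>. indicator (G \<inter> E) \<omega> * X \<omega> $ i \<partial>M) = (\<integral>\<omega>. indicator (G \<inter> E) \<omega> * V \<omega> $ i \<partial>M)"
  shows "AE \<omega> in M. \<omega> \<in> E \<longrightarrow> cond_exp_vec M F X \<omega> = V \<omega>"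
proof -
  have "AE \<omega> in M. \<omega> \<in> E \<longrightarrow> real_cond_exp M F (\<lambda>\<omega>. X \<omega> $ i) \<omega> = V \<omega> $ i" for i
    by (rule real_cond_exp_eq_on_event[OF E X V]) (use V' eq in auto)
  then have "AE \<omega> in M. \<forall>i\<in>UNIV. \<omega> \<in> E \<longrightarrow> real_cond_exp M F (\<lambda>\<omega>. X \<omega> $ i) \<omega> = V \<omega> $ i"
    by (subst AE_finite_all) auto
  then show ?thesis
    by (rule AE_mp[OF _ AE_I2]) (auto simp: vec_eq_iff cond_exp_vec_nth)
qed

lemma (in sigma_finite_subalgebra) integrable_cond_exp_vec_nth:
  "(\<And>l. integrable M (\<lambda>\<omega>. X \<omega> $ l)) \<Longrightarrow> integrable M (\<lambda>\<omega>. cond_exp_vec M F X \<omega> $ i)"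
  unfolding cond_exp_vec_nth by (rule real_cond_exp_int(1))

lemma integrable_matrix_vector_mult_nth:
  fixes X :: "'a \<Rightarrow> real^'n" and C :: "real^'n^'m"
  shows "(\<And>l. integrable M (\<lambda>\<omega>. X \<omega> $ l)) \<Longrightarrow> integrable M (\<lambda>\<omega>. (C *v X \<omega>) $ i)"
  unfolding matrix_vector_mult_nth by auto

lemma (in sigma_finite_subalgebra) integral_indicator_matrix_cond_exp_vec:
  fixes X :: "'a \<Rightarrow> real^'n" and C :: "real^'n^'m"
  assumes H: "H \<in> sets F" and X: "\<And>l. integrable M (\<lambda>\<omega>. X \<omega> $ l)"
  shows "(\<integral>\<omega>. indicator H \<omega> * (C *v cond_exp_vec M F X \<omega>) $ i \<partial>M)
       = (\<integral>\<omega>. indicator H \<omega> * (C *v X \<omega>) $ i \<partial>M)"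
proof -
  have HM: "H \<in> sets M" using H subalg by (auto simp: subalgebra_def)
  note int = integrable_indicator_mult[OF HM]
  have cond: "(\<integral>\<omega>. indicator H \<omega> * real_cond_exp M F (\<lambda>\<eta>. X \<eta> $ l) \<omega> \<partial>M)
      = (\<integral>\<omega>. indicator H \<omega> * X \<omega> $ l \<partial>M)" for l
    by (rule real_cond_exp_intg(2)) (use int[OF X] H X in \<open>auto intro: borel_measurable_integrable\<close>)
  have lin: "(\<integral>\<omega>. indicator H \<omega> * (\<Sum>l\<in>UNIV. C $ i $ l * f l \<omega>) \<partial>M)
      = (\<Sum>l\<in>UNIV. C $ i $ l * (\<integral>\<omega>. indicator H \<omega> * f l \<omega> \<partial>M))"
    if "\<And>l. integrable M (f l)" for f
  proof -
    have "(\<integral>\<omega>. indicator H \<omega> * (\<Sum>l\<in>UNIV. C $ i $ l * f l \<omega>) \<partial>M)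
        = (\<integral>\<omega>. (\<Sum>l\<in>UNIV. C $ i $ l * (indicator H \<omega> * f l \<omega>)) \<partial>M)"
      by (simp only: sum_distrib_left mult.left_commute)
    also have "\<dots> = (\<Sum>l\<in>UNIV. C $ i $ l * (\<integral>\<omega>. indicator H \<omega> * f l \<omega> \<partial>M))"
      using int[OF that] by simp
    finally show ?thesis .
  qed
  show ?thesis
    unfolding matrix_vector_mult_nth cond_exp_vec_nth
    using lin[OF real_cond_exp_int(1)[OF X]] lin[OF X] cond by simp
qed

section \<open>Ages of information and the unrolled dynamics\<close>

lemma zeta_le: "zeta tau k \<le> k"
  by (induction k) auto

lemma diff_zeta_le_Suc: "k - zeta tau k \<le> Suc k - zeta tau (Suc k)"
  using zeta_le[of tau k] by auto

text \<open>The sample held by the controller is never fresher than the one at the trigger.\<close>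

lemma eta_Suc_bound: "eta tau dl (Suc k) = enat e \<Longrightarrow> e \<le> Suc k \<and> Suc k - e \<le> k - zeta tau k"
proof (induction k arbitrary: e)
  case 0
  then show ?case by (auto split: if_splits)
next
  case (Suc k)
  show ?case
  proof (cases "dl (Suc k)")
    case True
    then show ?thesis using Suc.prems zeta_le[of tau "Suc k"] by auto
  next
    case False
    then have "eta tau dl (Suc k) + 1 = enat e"
      using Suc.prems by (subst (asm) eta.simps(2)) (simp del: eta.simps)
    then obtain e' where e': "eta tau dl (Suc k) = enat e'" "e = e' + 1"
      by (cases "eta tau dl (Suc k)") (auto simp del: eta.simps simp: one_enat_def)
    then show ?thesis using Suc.IH[OF e'(1)] diff_zeta_le_Suc[of k tau] by auto
  qed
qed

lemma eta_rv_0: "eta_rv tau dl 0 = (\<lambda>\<omega>. \<infinity>)"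
  unfolding eta_rv_def by simp

lemma obs_c_0: "obs_c x tau dl 0 = (\<lambda>\<omega>. 0)"
  unfolding obs_c_def eta_rv_def by simp

lemma eta_rv_Suc:
  "eta_rv tau dl (Suc k) \<omega> = (if dl k \<omega> then enat (zeta_rv tau k \<omega> + 1) else eta_rv tau dl k \<omega> + 1)"
  unfolding eta_rv_def zeta_rv_def by simp

lemma zeta_rv_le: "zeta_rv tau k \<omega> \<le> k"
  unfolding zeta_rv_def by (rule zeta_le)

lemma obs_c_Suc_no_sample: "\<not> dl k \<omega> \<Longrightarrow> obs_c x tau dl (Suc k) \<omega> = obs_c x tau dl k \<omega>"
  unfolding obs_c_def eta_rv_Suc by (cases "eta_rv tau dl k \<omega>") (auto simp: one_enat_def)

lemma mpow_commute: "mpow A t ** A = A ** mpow A t"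
  by (induction t) (auto simp: matrix_mul_assoc[symmetric])

lemma linear_recursion_unroll:
  assumes dyn: "\<And>k. x (Suc k) = A *v x k + B *v u k + w k" and "z \<le> k"
  shows "x (Suc k) = mpow A (z + 1) *v x (k - z)
      + (\<Sum>t\<in>{0..z}. (mpow A t ** B) *v u (k - t))
      + (\<Sum>t\<in>{0..z}. mpow A t *v w (k - t))"
  using \<open>z \<le> k\<close>
proof (induction z)
  case 0 then show ?case using dyn[of k] by (simp add: matrix_vector_mul_lid)
next
  case (Suc z)
  have kz: "k - z = Suc (k - Suc z)" using Suc.prems by simp
  have "mpow A (z + 1) *v x (k - z) = mpow A (Suc z + 1) *v x (k - Suc z)
      + (mpow A (Suc z) ** B) *v u (k - Suc z) + mpow A (Suc z) *v w (k - Suc z)"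
    unfolding kz dyn
    by (simp add: matrix_vector_right_distrib matrix_vector_mul_assoc mpow_commute[symmetric] matrix_mul_assoc)
  then show ?case using Suc by (simp add: algebra_simps)
qed

section \<open>The closed loop\<close>

locale event_triggered_loop =
  fixes M :: "'a measure"
    and A :: "real^'n^'n" and B :: "real^'m^'n" and m0 :: "real^'n"
    and x w :: "nat \<Rightarrow> 'a \<Rightarrow> real^'n"
    and u :: "nat \<Rightarrow> 'a \<Rightarrow> real^'m"
    and tau :: "nat \<Rightarrow> 'a \<Rightarrow> nat"
    and dl :: "nat \<Rightarrow> 'a \<Rightarrow> bool"
    and xi :: "nat \<Rightarrow> 'a \<Rightarrow> real"
  assumes prob: "prob_space M"
    and x0_L2: "square_integrable_vec M (x 0)"
    and x0_mean: "\<And>i. (\<integral>\<omega>. x 0 \<omega> $ i \<partial>M) = m0 $ i"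
    and w_L2: "\<And>k. square_integrable_vec M (w k)"
    and w_mean: "\<And>k i. (\<integral>\<omega>. w k \<omega> $ i \<partial>M) = 0"
    and indep: "prob_space.indep_sets M
        (\<lambda>i. case i of PX0 \<Rightarrow> preimgs M (x 0) borel
                     | PW k \<Rightarrow> preimgs M (w k) borel
                     | PTau k \<Rightarrow> preimgs M (tau k) (count_space UNIV)
                     | PXi k \<Rightarrow> preimgs M (xi k) borel) UNIV"
    and dyn: "\<And>k \<omega>. \<omega> \<in> space M \<Longrightarrow> x (Suc k) \<omega> = A *v x k \<omega> + B *v u k \<omega> + w k \<omega>"
    and ctrl: "\<And>k. u k \<in> borel_measurable (Ic M x tau dl u k)"
    and ctrl_L2: "\<And>k i. integrable M (\<lambda>\<omega>. (u k \<omega> $ i)\<^sup>2)"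
    and trig: "\<And>k. dl k \<in> measurable
        (sigma (space M) (gens_e M x tau dl u k \<union> preimgs M (xi k) borel)) (count_space UNIV)"
begin

sublocale prob_space M by (rule prob)

abbreviation "gc k \<equiv> gens_c M x tau dl u k"
abbreviation "ge k \<equiv> gens_e M x tau dl u k"
abbreviation "Info k \<equiv> Ic M x tau dl u k"
abbreviation "Info_dl k \<equiv> Ic_dl M x tau dl u k"

definition prim_gens :: "prim \<Rightarrow> 'a set set" where
  "prim_gens i = (case i of PX0 \<Rightarrow> preimgs M (x 0) borel
                     | PW k \<Rightarrow> preimgs M (w k) borel
                     | PTau k \<Rightarrow> preimgs M (tau k) (count_space UNIV)
                     | PXi k \<Rightarrow> preimgs M (xi k) borel)"

definition revealed :: "nat \<Rightarrow> prim \<Rightarrow> bool" where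
  "revealed j i \<longleftrightarrow> (case i of PW k \<Rightarrow> k < j | _ \<Rightarrow> True)"

text \<open>Prim j is generated by x_0, w_0, ..., w_(j-1), all delays and all trigger
  randomisations: it determines x_j but is independent of w_j.\<close>

definition Prim :: "nat \<Rightarrow> 'a measure" where
  "Prim j = sigma (space M) (\<Union>i\<in>Collect (revealed j). prim_gens i)"

definition sample_le :: "nat \<Rightarrow> nat \<Rightarrow> 'a set" where
  "sample_le k j = {\<omega> \<in> space M. k - zeta_rv tau k \<omega> \<le> j}"

lemma indep_prim_gens: "indep_sets prim_gens UNIV"
  using indep unfolding prim_gens_def[abs_def] .

lemma prim_gens_events: "prim_gens i \<subseteq> events"
  using indep_prim_gens unfolding indep_sets_def by blast

lemma prim_gens_revealed_Pow: "(\<Union>i\<in>Collect (revealed j). prim_gens i) \<subseteq> Pow (space M)"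
  using prim_gens_events sets.sets_into_space by blast

lemma space_Prim [simp]: "space (Prim j) = space M"
  unfolding Prim_def using prim_gens_revealed_Pow by simp

lemma sets_Prim: "sets (Prim j) = sigma_sets (space M) (\<Union>i\<in>Collect (revealed j). prim_gens i)"
  unfolding Prim_def using prim_gens_revealed_Pow by simp

lemma sets_Prim_subset: "sets (Prim j) \<subseteq> events"
  unfolding sets_Prim using prim_gens_events by (intro sets.sigma_sets_subset) auto

lemma sets_Prim_mono: "i \<le> j \<Longrightarrow> sets (Prim i) \<subseteq> sets (Prim j)"
  unfolding sets_Prim
  by (intro sigma_sets_subseteq UN_mono) (auto simp: revealed_def split: prim.splits)

lemma measurable_Prim_mono: "f \<in> measurable (Prim i) N \<Longrightarrow> i \<le> j \<Longrightarrow> f \<in> measurable (Prim j) N"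
  using sets_Prim_mono[of i j] unfolding measurable_def by auto

lemma measurable_Prim_M: "f \<in> measurable (Prim j) N \<Longrightarrow> f \<in> measurable M N"
  using sets_Prim_subset[of j] unfolding measurable_def by auto

lemma measurable_Prim_revealed:
  assumes "revealed j i" "preimgs M f N = prim_gens i" "space N = UNIV"
  shows "f \<in> measurable (Prim j) N"
  by (rule measurable_preimgsI) (use assms in \<open>auto simp: sets_Prim\<close>)

lemma x0_Prim: "x 0 \<in> borel_measurable (Prim j)"
  by (rule measurable_Prim_revealed[of _ PX0]) (auto simp: revealed_def prim_gens_def)

lemma w_Prim: "i < j \<Longrightarrow> w i \<in> borel_measurable (Prim j)"
  by (rule measurable_Prim_revealed[of _ "PW i"]) (auto simp: revealed_def prim_gens_def)

lemma tau_Prim: "tau i \<in> measurable (Prim j) (count_space UNIV)"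
  by (rule measurable_Prim_revealed[of _ "PTau i"]) (auto simp: revealed_def prim_gens_def)

lemma xi_Prim: "xi i \<in> borel_measurable (Prim j)"
  by (rule measurable_Prim_revealed[of _ "PXi i"]) (auto simp: revealed_def prim_gens_def)

lemma w_measurable [measurable]: "w i \<in> borel_measurable M"
  using w_Prim[of i "Suc i"] measurable_Prim_M by blast

lemma zeta_Prim: "zeta_rv tau k \<in> measurable (Prim j) (count_space UNIV)"
proof (induction k)
  case 0 then show ?case unfolding zeta_rv_def by simp
next
  case (Suc k)
  have nat_borel: "f \<in> borel_measurable (Prim j)" if "f \<in> measurable (Prim j) (count_space UNIV)"
    for f :: "'a \<Rightarrow> nat"
    using that by (rule measurable_compose) simp
  note [measurable] = Suc tau_Prim nat_borel[OF Suc] nat_borel[OF tau_Prim]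
  have "zeta_rv tau (Suc k) = (\<lambda>\<omega>. if tau (Suc k) \<omega> < zeta_rv tau k \<omega> + 1
      then tau (Suc k) \<omega> else zeta_rv tau k \<omega> + 1)"
    by (simp add: zeta_rv_def fun_eq_iff)
  then show ?case by simp
qed

lemma sample_le_Prim: "sample_le k j \<in> sets (Prim j)"
proof -
  note [measurable] = zeta_Prim
  have "{\<omega> \<in> space (Prim j). k - zeta_rv tau k \<omega> \<le> j} \<in> sets (Prim j)" by measurable
  then show ?thesis unfolding sample_le_def by simp
qed

lemma sample_le_self: "sample_le k k = space M"
  unfolding sample_le_def by auto

lemma sample_le_Suc_subset: "sample_le (Suc k) j \<subseteq> sample_le k j"
  unfolding sample_le_def zeta_rv_def using diff_zeta_le_Suc by (auto intro: order_trans)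

lemma integrable_w_nth: "integrable M (\<lambda>\<omega>. w k \<omega> $ i)"
  using w_L2 integrable_if_square_integrable unfolding square_integrable_vec_def by blast

lemma integral_indicator_noise:
  assumes H: "H \<in> sets (Prim j)"
  shows "(\<integral>\<omega>. indicator H \<omega> * w j \<omega> $ l \<partial>M) = 0"
proof -
  define I where "I = (\<lambda>b. if b then Collect (revealed j) else {PW j})"
  have "disjoint_family_on I UNIV"
    unfolding disjoint_family_on_def I_def revealed_def by auto
  moreover have "indep_sets prim_gens (\<Union>b. I b)"
    using indep_prim_gens by (rule indep_sets_mono_index[rotated]) auto
  moreover have "Int_stable (prim_gens i)" for i
    by (cases i) (simp_all add: prim_gens_def Int_stable_preimgs)
  ultimately have "indep_sets (\<lambda>b. sigma_sets (space M) (\<Union>i\<in>I b. prim_gens i)) UNIV"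
    using indep_sets_collect_sigma by blast
  moreover have "sets (sigma (space M) (preimgs M (w j) borel)) = sigma_sets (space M) (prim_gens (PW j))"
    using preimgs_subset_Pow[of M "w j" borel] by (simp add: prim_gens_def)
  ultimately have "indep_set (sets (Prim j)) (sets (sigma (space M) (preimgs M (w j) borel)))"
    unfolding indep_set_def I_def sets_Prim
    by (elim indep_sets_cong[THEN iffD1, rotated 2]) (auto split: bool.splits)
  moreover have "w j \<in> borel_measurable (sigma (space M) (preimgs M (w j) borel))"
    by (rule measurable_sigma_preimgsI[OF _ preimgs_subset_Pow]) auto
  moreover have "subalgebra M (sigma (space M) (preimgs M (w j) borel))"
    using prim_gens_events[of "PW j"] preimgs_subset_Pow[of M "w j" borel]
      sets.sigma_sets_subset[of "preimgs M (w j) borel" M]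
    by (simp add: subalgebra_def prim_gens_def)
  ultimately have "(\<integral>\<omega>. indicator H \<omega> * w j \<omega> $ l \<partial>M) = prob H * (\<integral>\<omega>. w j \<omega> $ l \<partial>M)"
    using H sets_Prim_subset integrable_w_nth by (intro integral_indicator_mult_indep) (auto simp: subalgebra_def)
  then show ?thesis by (simp add: w_mean)
qed

lemma sample_le_antimono: "t \<le> k \<Longrightarrow> sample_le k j \<subseteq> sample_le t j"
  by (induction k rule: dec_induct) (use sample_le_Suc_subset in blast)+

definition causal :: "nat \<Rightarrow> nat \<Rightarrow> 'a set \<Rightarrow> bool" where
  "causal k j S \<longleftrightarrow> S \<inter> sample_le k j \<in> sets (Prim j)"

definition causal_fun :: "nat \<Rightarrow> nat \<Rightarrow> ('a \<Rightarrow> 'b) \<Rightarrow> 'b measure \<Rightarrow> bool" where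
  "causal_fun k j f N \<longleftrightarrow> (\<forall>S\<in>preimgs M f N. causal k j S)"

lemma causal_fun_iff_measurable_on_event:
  "space N = UNIV \<Longrightarrow> causal_fun k j f N \<longleftrightarrow> measurable_on_event (Prim j) (sample_le k j) f N"
  unfolding causal_fun_def causal_def
  by (rule measurable_on_event_iff_preimgs[symmetric]) (simp_all add: sample_le_Prim)

lemma causal_fun_self_measurable:
  "causal_fun k k f N \<Longrightarrow> space N = UNIV \<Longrightarrow> f \<in> measurable (Prim k) N"
  using measurable_on_event_space[of "Prim k" f N]
  by (simp add: causal_fun_iff_measurable_on_event sample_le_self)

lemma causal_funI_measurable:
  assumes "f \<in> measurable (Prim i) N" "i \<le> j"
  shows "causal_fun k j f N"
proof -
  have "f \<in> measurable (Prim j) N" using assms by (rule measurable_Prim_mono)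
  then have "preimgs M f N \<subseteq> sets (Prim j)" by (rule preimgs_subset_sets) simp
  then show ?thesis unfolding causal_fun_def causal_def using sample_le_Prim by auto
qed

lemma causal_mono:
  assumes "causal t j S" "t \<le> k"
  shows "causal k j S"
proof -
  have "S \<inter> sample_le k j = (S \<inter> sample_le t j) \<inter> sample_le k j"
    using sample_le_antimono[OF assms(2)] by auto
  then show ?thesis using assms(1) sample_le_Prim unfolding causal_def by auto
qed

lemma causal_fun_sigma:
  assumes "f \<in> measurable (sigma (space M) G) N" "G \<subseteq> Pow (space M)" "\<forall>S\<in>G. causal k j S"
  shows "causal_fun k j f N"
  unfolding causal_fun_def
proof
  fix S assume "S \<in> preimgs M f N"
  then obtain A where A: "A \<in> sets N" "S = f -` A \<inter> space M" unfolding preimgs_def by blast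
  have "S \<in> sigma_sets (space M) G" using measurable_sets[OF assms(1) A(1)] A(2) assms(2) by simp
  then show "causal k j S"
    unfolding causal_def by (rule sigma_sets_Int_in_sets) (use assms(3) sample_le_Prim in \<open>auto simp: causal_def\<close>)
qed

lemma gens_c_Pow: "gc k \<subseteq> Pow (space M)"
  unfolding gens_c_def preimgs_def by auto

lemma gens_e_Pow: "ge k \<subseteq> Pow (space M)"
  unfolding gens_e_def gens_c_def preimgs_def by auto

lemma gens_c_Suc: "gc (Suc k) = gc k \<union> preimgs M (eta_rv tau dl (Suc k)) (count_space UNIV)
   \<union> preimgs M (obs_c x tau dl (Suc k)) borel \<union> preimgs M (dl k) (count_space UNIV) \<union> preimgs M (u k) borel"
  unfolding gens_c_def atMost_Suc lessThan_Suc by auto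

lemma gens_c_0: "gc 0 = preimgs M (eta_rv tau dl 0) (count_space UNIV) \<union> preimgs M (obs_c x tau dl 0) borel"
  unfolding gens_c_def by simp

lemma causal_fun_u:
  assumes "\<forall>S\<in>gc k. causal k j S"
  shows "causal_fun k j (u k) borel"
  using ctrl[of k] unfolding Ic_def by (rule causal_fun_sigma[OF _ gens_c_Pow assms])

lemma causal_fun_dl:
  assumes "\<forall>S\<in>ge k. causal k j S"
  shows "causal_fun k j (dl k) (count_space UNIV)"
proof (rule causal_fun_sigma[OF trig])
  show "ge k \<union> preimgs M (xi k) borel \<subseteq> Pow (space M)" using gens_e_Pow preimgs_subset_Pow by blast
  have "causal_fun k j (xi k) borel" using xi_Prim[of k 0] by (rule causal_funI_measurable) simp
  then show "\<forall>S\<in>ge k \<union> preimgs M (xi k) borel. causal k j S" using assms unfolding causal_fun_def by blast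
qed

lemma causal_fun_eta_Suc:
  assumes "causal_fun k j (dl k) (count_space UNIV)" "causal_fun k j (eta_rv tau dl k) (count_space UNIV)"
  shows "causal_fun k j (eta_rv tau dl (Suc k)) (count_space UNIV)"
proof -
  obtain d' where d': "d' \<in> measurable (Prim j) (count_space UNIV)"
      "\<And>\<omega>. \<omega> \<in> sample_le k j \<Longrightarrow> dl k \<omega> = d' \<omega>"
    using assms(1) unfolding causal_fun_iff_measurable_on_event[OF space_count_space] measurable_on_event_def
    by blast
  obtain e' where e': "e' \<in> measurable (Prim j) (count_space UNIV)"
      "\<And>\<omega>. \<omega> \<in> sample_le k j \<Longrightarrow> eta_rv tau dl k \<omega> = e' \<omega>"
    using assms(2) unfolding causal_fun_iff_measurable_on_event[OF space_count_space] measurable_on_event_def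
    by blast
  note [measurable] = d'(1) e'(1) zeta_Prim
  have "(\<lambda>\<omega>. if d' \<omega> then enat (zeta_rv tau k \<omega> + 1) else e' \<omega> + 1) \<in> measurable (Prim j) (count_space UNIV)"
    by measurable
  then show ?thesis unfolding causal_fun_iff_measurable_on_event[OF space_count_space]
    by (rule measurable_on_eventI) (simp add: eta_rv_Suc d'(2) e'(2))
qed

lemma causal_fun_obs_c_Suc:
  assumes eta: "causal_fun k j (eta_rv tau dl (Suc k)) (count_space UNIV)"
    and xs: "\<And>i. i \<le> Suc k \<Longrightarrow> x i \<in> borel_measurable (Prim i)"
  shows "causal_fun k j (obs_c x tau dl (Suc k)) borel"
proof -
  obtain e' where e': "e' \<in> measurable (Prim j) (count_space UNIV)"
      "\<And>\<omega>. \<omega> \<in> sample_le k j \<Longrightarrow> eta_rv tau dl (Suc k) \<omega> = e' \<omega>"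
    using eta unfolding causal_fun_iff_measurable_on_event[OF space_count_space] measurable_on_event_def
    by blast
  \<comment> \<open>Capping the index at j is harmless on sample_le k j, by eta_Suc_bound.\<close>
  define g where "g = (\<lambda>(e::enat) \<omega>. case e of enat e \<Rightarrow> x (min j (Suc k - e)) \<omega> | \<infinity> \<Rightarrow> 0)"
  have "(\<lambda>\<omega>. g (e' \<omega>) \<omega>) \<in> borel_measurable (Prim j)"
  proof (rule measurable_compose_countable[OF _ e'(1)])
    fix e :: enat
    show "g e \<in> borel_measurable (Prim j)"
    proof (cases e)
      case (enat n)
      have "x (min j (Suc k - n)) \<in> borel_measurable (Prim (min j (Suc k - n)))" using xs by simp
      then have "x (min j (Suc k - n)) \<in> borel_measurable (Prim j)" by (rule measurable_Prim_mono) simp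
      then show ?thesis unfolding g_def enat by simp
    qed (simp add: g_def)
  qed
  moreover have "obs_c x tau dl (Suc k) \<omega> = g (e' \<omega>) \<omega>" if \<omega>: "\<omega> \<in> sample_le k j" for \<omega>
  proof (cases "e' \<omega>")
    case (enat n)
    then have "eta (\<lambda>j. tau j \<omega>) (\<lambda>j. dl j \<omega>) (Suc k) = enat n"
      using e'(2)[OF \<omega>] unfolding eta_rv_def by simp
    from eta_Suc_bound[OF this] have "Suc k - n \<le> k - zeta_rv tau k \<omega>" unfolding zeta_rv_def by simp
    also have "\<dots> \<le> j" using \<omega> unfolding sample_le_def by simp
    finally have "min j (Suc k - n) = Suc k - n" by simp
    then show ?thesis using enat e'(2)[OF \<omega>] unfolding obs_c_def g_def by simp
  next
    case infinity
    then show ?thesis using e'(2)[OF \<omega>] unfolding obs_c_def g_def by simp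
  qed
  ultimately show ?thesis unfolding causal_fun_iff_measurable_on_event[OF space_borel]
    by (rule measurable_on_eventI)
qed

lemma causal_fun_obs_e:
  assumes xs: "\<And>i. i \<le> k \<Longrightarrow> x i \<in> borel_measurable (Prim i)"
  shows "causal_fun k j (obs_e x tau k) borel"
proof -
  define g where "g = (\<lambda>(n::nat) \<omega>. x (min j (min k n)) \<omega>)"
  have [measurable]: "(\<lambda>\<omega>. k - zeta_rv tau k \<omega>) \<in> measurable (Prim j) (count_space UNIV)"
    using zeta_Prim by measurable
  have "(\<lambda>\<omega>. g (k - zeta_rv tau k \<omega>) \<omega>) \<in> borel_measurable (Prim j)"
  proof (rule measurable_compose_countable)
    fix n :: nat
    have "x (min j (min k n)) \<in> borel_measurable (Prim (min j (min k n)))" using xs by simp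
    then show "g n \<in> borel_measurable (Prim j)" unfolding g_def by (rule measurable_Prim_mono) simp
  qed measurable
  moreover have "obs_e x tau k \<omega> = g (k - zeta_rv tau k \<omega>) \<omega>" if "\<omega> \<in> sample_le k j" for \<omega>
    using that unfolding sample_le_def obs_e_def g_def by auto
  ultimately show ?thesis unfolding causal_fun_iff_measurable_on_event[OF space_borel]
    by (rule measurable_on_eventI)
qed

lemma gens_e_causal:
  assumes xs: "\<And>i. i \<le> k \<Longrightarrow> x i \<in> borel_measurable (Prim i)" and gc: "\<forall>S\<in>gc k. causal k j S"
  shows "\<forall>S\<in>ge k. causal k j S"
proof -
  have "causal k j S" if "t \<le> k" "S \<in> preimgs M (zeta_rv tau t) (count_space UNIV) \<union> preimgs M (obs_e x tau t) borel"
    for t S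
  proof -
    have "causal_fun t j (zeta_rv tau t) (count_space UNIV)"
      using zeta_Prim[of t 0] by (rule causal_funI_measurable) simp
    moreover have "causal_fun t j (obs_e x tau t) borel"
      using xs \<open>t \<le> k\<close> by (intro causal_fun_obs_e) simp
    ultimately have "causal t j S" using that(2) unfolding causal_fun_def by blast
    then show ?thesis using \<open>t \<le> k\<close> by (rule causal_mono)
  qed
  then show ?thesis using gc unfolding gens_e_def by blast
qed

lemma x_Suc_Prim:
  assumes "x k \<in> borel_measurable (Prim k)" "u k \<in> borel_measurable (Prim k)"
  shows "x (Suc k) \<in> borel_measurable (Prim (Suc k))"
proof -
  have [measurable]: "x k \<in> borel_measurable (Prim (Suc k))" "u k \<in> borel_measurable (Prim (Suc k))"
    using assms by (auto intro: measurable_Prim_mono)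
  have [measurable]: "w k \<in> borel_measurable (Prim (Suc k))" by (rule w_Prim) simp
  have "(\<lambda>\<omega>. A *v x k \<omega> + B *v u k \<omega> + w k \<omega>) \<in> borel_measurable (Prim (Suc k))" by measurable
  moreover have "x (Suc k) \<in> borel_measurable (Prim (Suc k)) \<longleftrightarrow>
      (\<lambda>\<omega>. A *v x k \<omega> + B *v u k \<omega> + w k \<omega>) \<in> borel_measurable (Prim (Suc k))"
    by (rule measurable_cong) (simp add: dyn)
  ultimately show ?thesis by blast
qed

text \<open>Causality: on the event that the trigger's freshest sample at time k is x_i with i \<le> j,
  everything known to the controller up to time k is determined by the primitives in Prim j.\<close>

definition causal_upto :: "nat \<Rightarrow> bool" where
  "causal_upto k \<longleftrightarrow> (\<forall>i\<le>k. x i \<in> borel_measurable (Prim i)) \<and> (\<forall>j. \<forall>S\<in>gc k. causal k j S)"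

lemma causal_upto_step:
  assumes "causal_upto k"
  shows "(\<forall>i\<le>Suc k. x i \<in> borel_measurable (Prim i)) \<and> (\<forall>j. \<forall>S\<in>gc (Suc k). causal k j S)"
proof -
  have xs: "\<And>i. i \<le> k \<Longrightarrow> x i \<in> borel_measurable (Prim i)" and gc: "\<And>j. \<forall>S\<in>gc k. causal k j S"
    using assms unfolding causal_upto_def by auto
  have dl: "causal_fun k j (dl k) (count_space UNIV)" for j
    using causal_fun_dl[OF gens_e_causal[OF xs gc]] .
  have u: "causal_fun k j (u k) borel" for j using causal_fun_u[OF gc] .
  have "x (Suc k) \<in> borel_measurable (Prim (Suc k))"
    using x_Suc_Prim[OF xs causal_fun_self_measurable[OF u]] by simp
  then have xs': "\<forall>i\<le>Suc k. x i \<in> borel_measurable (Prim i)" using xs le_Suc_eq by auto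
  have "preimgs M (eta_rv tau dl k) (count_space UNIV) \<subseteq> gc k" unfolding gens_c_def by blast
  then have "causal_fun k j (eta_rv tau dl k) (count_space UNIV)" for j
    using gc unfolding causal_fun_def by blast
  then have eta: "causal_fun k j (eta_rv tau dl (Suc k)) (count_space UNIV)" for j
    using causal_fun_eta_Suc[OF dl] by blast
  have obs: "causal_fun k j (obs_c x tau dl (Suc k)) borel" for j
    using causal_fun_obs_c_Suc[OF eta] xs' by blast
  have "\<forall>S\<in>gc (Suc k). causal k j S" for j
    using gc[of j] dl[of j] u[of j] eta[of j] obs[of j] unfolding gens_c_Suc causal_fun_def by blast
  with xs' show ?thesis by blast
qed

lemma causal_upto: "causal_upto k"
proof (induction k)
  case 0
  have "causal_fun 0 j (eta_rv tau dl 0) (count_space UNIV)" "causal_fun 0 j (obs_c x tau dl 0) borel" for j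
    unfolding eta_rv_0 obs_c_0 by (auto intro: causal_funI_measurable[of _ 0])
  then show ?case using x0_Prim unfolding causal_upto_def causal_fun_def gens_c_0 by auto
next
  case (Suc k)
  have "causal (Suc k) j S" if "S \<in> gc (Suc k)" for j S
    using causal_upto_step[OF Suc] that causal_mono[of k j S "Suc k"] by auto
  then show ?case using causal_upto_step[OF Suc] unfolding causal_upto_def by blast
qed

lemma x_Prim: "x k \<in> borel_measurable (Prim k)"
  using causal_upto[of k] unfolding causal_upto_def by auto

lemma gens_c_Suc_causal: "\<forall>S\<in>gc (Suc k). causal k j S"
  using causal_upto_step[OF causal_upto] by blast

lemma u_Prim: "u k \<in> borel_measurable (Prim k)"
  using gens_c_Suc_causal[of k k] causal_fun_self_measurable[of k "u k" borel]
  unfolding gens_c_Suc causal_fun_def by simp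

lemma x_measurable [measurable]: "x k \<in> borel_measurable M"
  using x_Prim by (rule measurable_Prim_M)

lemma u_measurable [measurable]: "u k \<in> borel_measurable M"
  using u_Prim by (rule measurable_Prim_M)

lemma Info_Suc_Int_sample_le:
  assumes "G \<in> sets (Info (Suc k))"
  shows "G \<inter> sample_le k j \<in> sets (Prim j)"
proof -
  have "G \<in> sigma_sets (space M) (gc (Suc k))" using assms gens_c_Pow by (simp add: Ic_def)
  then show ?thesis
    by (rule sigma_sets_Int_in_sets) (use gens_c_Suc_causal[of k j] sample_le_Prim in \<open>auto simp: causal_def\<close>)
qed

lemma gens_c_dl_Pow: "gc k \<union> preimgs M (dl k) (count_space UNIV) \<subseteq> Pow (space M)"
  using gens_c_Pow preimgs_subset_Pow by blast

lemma sets_Info: "sets (Info k) = sigma_sets (space M) (gc k)"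
  unfolding Ic_def using gens_c_Pow by simp

lemma space_Info [simp]: "space (Info k) = space M"
  unfolding Ic_def using gens_c_Pow by simp

lemma sets_Info_dl: "sets (Info_dl k) = sigma_sets (space M) (gc k \<union> preimgs M (dl k) (count_space UNIV))"
  unfolding Ic_dl_def using gens_c_dl_Pow by simp

lemma space_Info_dl [simp]: "space (Info_dl k) = space M"
  unfolding Ic_dl_def using gens_c_dl_Pow by simp

lemma sets_Info_subset_Info_dl: "sets (Info k) \<subseteq> sets (Info_dl k)"
  unfolding sets_Info sets_Info_dl by (rule sigma_sets_subseteq) auto

lemma sets_Info_dl_subset_Info_Suc: "sets (Info_dl k) \<subseteq> sets (Info (Suc k))"
  unfolding sets_Info sets_Info_dl by (rule sigma_sets_subseteq) (auto simp: gens_c_Suc)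

lemma sets_Info_Suc_subset_Prim: "sets (Info (Suc k)) \<subseteq> sets (Prim k)"
proof
  fix G assume G: "G \<in> sets (Info (Suc k))"
  then have "G \<inter> sample_le k k = G" using sets.sets_into_space[OF G] by (auto simp: sample_le_self)
  then show "G \<in> sets (Prim k)" using Info_Suc_Int_sample_le[OF G, of k] by simp
qed

lemma sets_Info_dl_subset_Prim: "sets (Info_dl k) \<subseteq> sets (Prim k)"
  using sets_Info_dl_subset_Info_Suc sets_Info_Suc_subset_Prim by blast

lemma finite_measure_subalgebra_Info: "finite_measure_subalgebra M (Info k)"
  using sets_Info_subset_Info_dl[of k] sets_Info_dl_subset_Prim[of k] sets_Prim_subset[of k]
  by (intro finite_measure_subalgebraI) auto

lemma finite_measure_subalgebra_Info_dl: "finite_measure_subalgebra M (Info_dl k)"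
  using sets_Info_dl_subset_Prim sets_Prim_subset by (intro finite_measure_subalgebraI) auto

lemma measurable_Info_SucI:
  "preimgs M f N \<subseteq> gc (Suc k) \<Longrightarrow> space N = UNIV \<Longrightarrow> f \<in> measurable (Info (Suc k)) N"
  unfolding Ic_def by (rule measurable_sigma_preimgsI[OF _ gens_c_Pow])

lemma measurable_Info_dlI:
  "preimgs M f N \<subseteq> gc k \<union> preimgs M (dl k) (count_space UNIV) \<Longrightarrow> space N = UNIV
    \<Longrightarrow> f \<in> measurable (Info_dl k) N"
  unfolding Ic_dl_def by (rule measurable_sigma_preimgsI[OF _ gens_c_dl_Pow])

lemma u_Info_dl: "u k \<in> borel_measurable (Info_dl k)"
  using ctrl[of k] sets_Info_subset_Info_dl[of k] measurable_mono[of borel borel "Info k" "Info_dl k"]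
  by auto

lemma x_L2: "square_integrable_vec M (x k)"
proof (induction k)
  case 0 then show ?case by (rule x0_L2)
next
  case (Suc k)
  have "square_integrable_vec M (u k)"
    using ctrl_L2 u_measurable unfolding square_integrable_vec_def square_integrable_def by simp
  then have "square_integrable_vec M (\<lambda>\<omega>. A *v x k \<omega> + B *v u k \<omega> + w k \<omega>)"
    by (intro square_integrable_vec_add square_integrable_vec_matrix_vector_mult Suc w_L2)
  then show ?case
    unfolding square_integrable_vec_def using square_integrable_cong[of M "\<lambda>\<omega>. x (Suc k) \<omega> $ _"] dyn by simp
qed

lemma integrable_x_nth: "integrable M (\<lambda>\<omega>. x k \<omega> $ i)"
  using x_L2 integrable_if_square_integrable unfolding square_integrable_vec_def by blast

lemma integrable_u_nth: "integrable M (\<lambda>\<omega>. u k \<omega> $ i)"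
proof (rule integrable_if_square_integrable)
  have "(\<lambda>\<omega>. u k \<omega> $ i) \<in> borel_measurable M" by measurable
  with ctrl_L2 show "square_integrable M (\<lambda>\<omega>. u k \<omega> $ i)" unfolding square_integrable_def by simp
qed

lemma cond_exp_x0: "AE \<omega> in M. cond_exp_vec M (Info 0) (x 0) \<omega> = m0"
proof -
  interpret F: finite_measure_subalgebra M "Info 0" by (rule finite_measure_subalgebra_Info)
  have "gc 0 \<subseteq> {{}, space M}"
    unfolding gens_c_0 preimgs_def eta_rv_0 obs_c_0 by auto
  then have triv: "A = {} \<or> A = space M" if "A \<in> sets (Info 0)" for A
    using sigma_sets_trivial that unfolding sets_Info by blast
  have "AE \<omega> in M. real_cond_exp M (Info 0) (\<lambda>\<omega>. x 0 \<omega> $ i) \<omega> = m0 $ i" for i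
    using real_cond_exp_trivial[OF F.sigma_finite_subalgebra_axioms triv integrable_x_nth[of 0 i]] x0_mean[of i]
    by simp
  then have "AE \<omega> in M. \<forall>i\<in>UNIV. real_cond_exp M (Info 0) (\<lambda>\<omega>. x 0 \<omega> $ i) \<omega> = m0 $ i"
    by (subst AE_finite_all) auto
  then show ?thesis by (rule AE_mp[OF _ AE_I2]) (simp add: vec_eq_iff cond_exp_vec_nth)
qed

definition x_known :: "nat \<Rightarrow> 'a \<Rightarrow> real^'n" where
  "x_known k \<omega> = mpow A (zeta_rv tau k \<omega> + 1) *v x (k - zeta_rv tau k \<omega>) \<omega>
     + (\<Sum>t\<in>{0..zeta_rv tau k \<omega>}. (mpow A t ** B) *v u (k - t) \<omega>)"

definition noise_sum :: "nat \<Rightarrow> 'a \<Rightarrow> real^'n" where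
  "noise_sum k \<omega> = (\<Sum>t\<in>{0..zeta_rv tau k \<omega>}. mpow A t *v w (k - t) \<omega>)"

lemma x_Suc_eq_known_plus_noise: "\<omega> \<in> space M \<Longrightarrow> x (Suc k) \<omega> = x_known k \<omega> + noise_sum k \<omega>"
  using linear_recursion_unroll[of "\<lambda>j. x j \<omega>" A B "\<lambda>j. u j \<omega>" "\<lambda>j. w j \<omega>" "zeta_rv tau k \<omega>" k]
    dyn zeta_rv_le[of tau k \<omega>]
  unfolding x_known_def noise_sum_def by (simp add: add.assoc)

text \<open>The random summation range of the noise sum is encoded by the events sample_le k (k - t),
  each of which is revealed before the noise w_(k-t) it multiplies.\<close>

lemma noise_sum_nth: "\<omega> \<in> space M \<Longrightarrow> noise_sum k \<omega> $ i =
   (\<Sum>t\<in>{0..k}. \<Sum>l\<in>UNIV. mpow A t $ i $ l * (indicator (sample_le k (k - t)) \<omega> * w (k - t) \<omega> $ l))"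
proof -
  assume \<omega>: "\<omega> \<in> space M"
  have ind: "indicator (sample_le k (k - t)) \<omega> = (if t \<le> zeta_rv tau k \<omega> then 1 else (0::real))" if "t \<le> k" for t
    using \<omega> that zeta_rv_le[of tau k \<omega>] unfolding sample_le_def by (auto split: split_indicator)
  have "noise_sum k \<omega> $ i = (\<Sum>t\<in>{0..k} \<inter> {0..zeta_rv tau k \<omega>}. (mpow A t *v w (k - t) \<omega>) $ i)"
    unfolding noise_sum_def using zeta_rv_le[of tau k \<omega>] by (simp add: sum_component Int_absorb1)
  also have "\<dots> = (\<Sum>t\<in>{0..k}. if t \<in> {0..zeta_rv tau k \<omega>} then (mpow A t *v w (k - t) \<omega>) $ i else 0)"
    by (rule sum.inter_restrict) simp
  also have "\<dots> = (\<Sum>t\<in>{0..k}. \<Sum>l\<in>UNIV. mpow A t $ i $ l * (indicator (sample_le k (k - t)) \<omega> * w (k - t) \<omega> $ l))"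
    by (intro sum.cong refl) (auto simp: ind matrix_vector_mult_nth)
  finally show ?thesis .
qed

lemma integrable_noise_sum_nth: "integrable M (\<lambda>\<omega>. noise_sum k \<omega> $ i)"
proof -
  have "integrable M (\<lambda>\<omega>. indicator (sample_le k (k - t)) \<omega> * w (k - t) \<omega> $ l)" for t l
    by (rule integrable_indicator_mult[OF _ integrable_w_nth]) (use sample_le_Prim sets_Prim_subset in blast)
  then have "integrable M (\<lambda>\<omega>. \<Sum>t\<in>{0..k}. \<Sum>l\<in>UNIV.
      mpow A t $ i $ l * (indicator (sample_le k (k - t)) \<omega> * w (k - t) \<omega> $ l))"
    by auto
  then show ?thesis
    by (rule Bochner_Integration.integrable_cong[OF refl, THEN iffD1, rotated]) (simp add: noise_sum_nth)
qed

lemma integral_indicator_noise_sum: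
  assumes G: "G \<in> sets (Info (Suc k))"
  shows "(\<integral>\<omega>. indicator G \<omega> * noise_sum k \<omega> $ i \<partial>M) = 0"
proof -
  have GE: "G \<inter> sample_le k (k - t) \<in> sets (Prim (k - t))" for t by (rule Info_Suc_Int_sample_le[OF G])
  then have GEM: "G \<inter> sample_le k (k - t) \<in> events" for t using sets_Prim_subset by blast
  have "(\<integral>\<omega>. indicator G \<omega> * noise_sum k \<omega> $ i \<partial>M) = (\<integral>\<omega>. (\<Sum>t\<in>{0..k}. \<Sum>l\<in>UNIV.
      mpow A t $ i $ l * (indicator (G \<inter> sample_le k (k - t)) \<omega> * w (k - t) \<omega> $ l)) \<partial>M)"
    by (rule Bochner_Integration.integral_cong[OF refl])
       (simp add: noise_sum_nth sum_distrib_left algebra_simps indicator_inter_arith)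
  also have "\<dots> = (\<Sum>t\<in>{0..k}. \<Sum>l\<in>UNIV.
      mpow A t $ i $ l * (\<integral>\<omega>. indicator (G \<inter> sample_le k (k - t)) \<omega> * w (k - t) \<omega> $ l \<partial>M))"
    using integrable_indicator_mult[OF GEM integrable_w_nth] by (simp add: Bochner_Integration.integral_sum)
  also have "\<dots> = 0" using integral_indicator_noise[OF GE] by simp
  finally show ?thesis .
qed

lemma x_known_measurable_on_sample:
  "measurable_on_event (Info (Suc k)) {\<omega> \<in> space M. dl k \<omega>} (x_known k) borel"
proof (rule measurable_on_eventI)
  define g where "g = (\<lambda>e \<omega>. case e of enat e \<Rightarrow> mpow A e *v obs_c x tau dl (Suc k) \<omega>
       + (\<Sum>t\<in>{0..e - 1}. (mpow A t ** B) *v u (k - t) \<omega>) | \<infinity> \<Rightarrow> (0::real^'n))"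
  have eta: "eta_rv tau dl (Suc k) \<in> measurable (Info (Suc k)) (count_space UNIV)"
    by (rule measurable_Info_SucI) (auto simp: gens_c_Suc)
  have [measurable]: "obs_c x tau dl (Suc k) \<in> borel_measurable (Info (Suc k))"
    by (rule measurable_Info_SucI) (auto simp: gens_c_Suc)
  have [measurable]: "s \<le> k \<Longrightarrow> u s \<in> borel_measurable (Info (Suc k))" for s
    by (rule measurable_Info_SucI) (auto simp: gens_c_def)
  show "(\<lambda>\<omega>. g (eta_rv tau dl (Suc k) \<omega>) \<omega>) \<in> borel_measurable (Info (Suc k))"
  proof (rule measurable_compose_countable[OF _ eta])
    fix e :: enat
    show "g e \<in> borel_measurable (Info (Suc k))"
      by (cases e) (simp_all add: g_def)
  qed
  show "x_known k \<omega> = g (eta_rv tau dl (Suc k) \<omega>) \<omega>" if "\<omega> \<in> {\<omega> \<in> space M. dl k \<omega>}" for \<omega>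
    using that unfolding x_known_def g_def by (simp add: eta_rv_Suc obs_c_def)
qed

lemma cond_exp_x_Suc_if_sample:
  "AE \<omega> in M. dl k \<omega> \<longrightarrow> cond_exp_vec M (Info (Suc k)) (x (Suc k)) \<omega> = x_known k \<omega>"
proof -
  interpret F: finite_measure_subalgebra M "Info (Suc k)" by (rule finite_measure_subalgebra_Info)
  define E where "E = {\<omega> \<in> space M. dl k \<omega>}"
  have E: "E \<in> sets (Info (Suc k))"
  proof -
    have [measurable]: "dl k \<in> measurable (Info (Suc k)) (count_space UNIV)"
      by (rule measurable_Info_SucI) (auto simp: gens_c_Suc)
    have "{\<omega> \<in> space (Info (Suc k)). dl k \<omega>} \<in> sets (Info (Suc k))" by measurable
    then show ?thesis unfolding E_def by simp
  qed
  obtain V' where V': "V' \<in> borel_measurable (Info (Suc k))" "\<And>\<omega>. \<omega> \<in> E \<Longrightarrow> x_known k \<omega> = V' \<omega>"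
    using x_known_measurable_on_sample unfolding measurable_on_event_def E_def by blast
  have "AE \<omega> in M. \<omega> \<in> E \<longrightarrow>
      cond_exp_vec M (Info (Suc k)) (x (Suc k)) \<omega> = x (Suc k) \<omega> - noise_sum k \<omega>"
  proof (rule F.cond_exp_vec_eq_on_event[OF E _ _ V'(1)])
    show "\<omega> \<in> E \<Longrightarrow> x (Suc k) \<omega> - noise_sum k \<omega> = V' \<omega>" for \<omega>
      using V'(2) x_Suc_eq_known_plus_noise by (simp add: E_def)
    fix G i assume "G \<in> sets (Info (Suc k))"
    then have "G \<inter> E \<in> sets (Info (Suc k))" using E by auto
    moreover from this have "G \<inter> E \<in> events" using sets_Info_Suc_subset_Prim sets_Prim_subset by blast
    ultimately show "(\<integral>\<omega>. indicator (G \<inter> E) \<omega> * x (Suc k) \<omega> $ i \<partial>M)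
        = (\<integral>\<omega>. indicator (G \<inter> E) \<omega> * (x (Suc k) \<omega> - noise_sum k \<omega>) $ i \<partial>M)"
      using integral_indicator_noise_sum integrable_indicator_mult[OF _ integrable_x_nth]
        integrable_indicator_mult[OF _ integrable_noise_sum_nth]
      by (simp add: right_diff_distrib)
  qed (use integrable_x_nth integrable_noise_sum_nth in auto)
  then show ?thesis
    by (rule AE_mp[OF _ AE_I2]) (auto simp: E_def x_Suc_eq_known_plus_noise)
qed

text \<open>Without a transmission the controller's new data are functions of its old data:
  the age grows by one and the sample is unchanged.\<close>

lemma Info_Suc_Int_no_sample:
  assumes G: "G \<in> sets (Info (Suc k))"
  shows "G \<inter> {\<omega> \<in> space M. \<not> dl k \<omega>} \<in> sets (Info_dl k)"
proof -
  define E where "E = {\<omega> \<in> space M. \<not> dl k \<omega>}"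
  have [measurable]: "dl k \<in> measurable (Info_dl k) (count_space UNIV)"
    by (rule measurable_Info_dlI) auto
  have [measurable]: "eta_rv tau dl k \<in> measurable (Info_dl k) (count_space UNIV)"
    by (rule measurable_Info_dlI) (auto simp: gens_c_def)
  have obs: "obs_c x tau dl k \<in> borel_measurable (Info_dl k)"
    by (rule measurable_Info_dlI) (auto simp: gens_c_def)
  have "{\<omega> \<in> space (Info_dl k). \<not> dl k \<omega>} \<in> sets (Info_dl k)" by measurable
  then have E: "E \<in> sets (Info_dl k)" unfolding E_def by simp
  have on_E: "S \<inter> E \<in> sets (Info_dl k)"
    if "measurable_on_event (Info_dl k) E f N" "S \<in> preimgs M f N" for f :: "'a \<Rightarrow> 'b" and N S
    using measurable_on_event_preimgs_Int[OF that(1) E space_Info_dl that(2)] .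
  have eta_E: "measurable_on_event (Info_dl k) E (eta_rv tau dl (Suc k)) (count_space UNIV)"
    by (rule measurable_on_eventI[of "\<lambda>\<omega>. eta_rv tau dl k \<omega> + 1"]) (measurable, simp add: E_def eta_rv_Suc)
  have obs_E: "measurable_on_event (Info_dl k) E (obs_c x tau dl (Suc k)) borel"
    by (rule measurable_on_eventI[OF obs]) (simp add: E_def obs_c_Suc_no_sample)
  have dl_E: "measurable_on_event (Info_dl k) E (dl k) (count_space UNIV)"
    unfolding measurable_on_event_def by (intro bexI[of _ "dl k"]) simp_all
  have u_E: "measurable_on_event (Info_dl k) E (u k) borel"
    unfolding measurable_on_event_def using u_Info_dl by blast
  have gen: "S \<inter> E \<in> sets (Info_dl k)" if S: "S \<in> gc (Suc k)" for S
  proof -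
    consider "S \<in> gc k" | "S \<in> preimgs M (eta_rv tau dl (Suc k)) (count_space UNIV)"
      | "S \<in> preimgs M (obs_c x tau dl (Suc k)) borel" | "S \<in> preimgs M (dl k) (count_space UNIV)"
      | "S \<in> preimgs M (u k) borel"
      using S unfolding gens_c_Suc by blast
    then show ?thesis
    proof cases
      case 1
      then have "S \<in> sets (Info_dl k)" unfolding sets_Info_dl by (auto intro: sigma_sets.Basic)
      then show ?thesis using E by (rule sets.Int)
    qed (fact on_E[OF eta_E] on_E[OF obs_E] on_E[OF dl_E] on_E[OF u_E])+
  qed
  have "G \<in> sigma_sets (space M) (gc (Suc k))" using G unfolding sets_Info .
  then show ?thesis unfolding E_def[symmetric] by (rule sigma_sets_Int_in_sets) (use gen E in auto)
qed

lemma integral_indicator_x_Suc: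
  assumes H: "H \<in> sets (Info_dl k)"
  shows "(\<integral>\<omega>. indicator H \<omega> * x (Suc k) \<omega> $ i \<partial>M)
    = (\<integral>\<omega>. indicator H \<omega> * (A *v cond_exp_vec M (Info_dl k) (x k) \<omega> + B *v u k \<omega>) $ i \<partial>M)"
proof -
  interpret H: finite_measure_subalgebra M "Info_dl k" by (rule finite_measure_subalgebra_Info_dl)
  have H_Prim: "H \<in> sets (Prim k)" using H sets_Info_dl_subset_Prim by blast
  then have "H \<in> events" using sets_Prim_subset by blast
  note int = integrable_indicator_mult[OF this]
  have i1: "integrable M (\<lambda>\<omega>. indicator H \<omega> * (A *v x k \<omega>) $ i)"
    by (intro int integrable_matrix_vector_mult_nth integrable_x_nth)
  have i2: "integrable M (\<lambda>\<omega>. indicator H \<omega> * (B *v u k \<omega>) $ i)"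
    by (intro int integrable_matrix_vector_mult_nth integrable_u_nth)
  have i3: "integrable M (\<lambda>\<omega>. indicator H \<omega> * w k \<omega> $ i)"
    by (intro int integrable_w_nth)
  have i4: "integrable M (\<lambda>\<omega>. indicator H \<omega> * (A *v cond_exp_vec M (Info_dl k) (x k) \<omega>) $ i)"
    by (intro int integrable_matrix_vector_mult_nth H.integrable_cond_exp_vec_nth integrable_x_nth)
  have "(\<integral>\<omega>. indicator H \<omega> * x (Suc k) \<omega> $ i \<partial>M)
      = (\<integral>\<omega>. indicator H \<omega> * (A *v x k \<omega>) $ i + indicator H \<omega> * (B *v u k \<omega>) $ i
           + indicator H \<omega> * w k \<omega> $ i \<partial>M)"
    by (rule Bochner_Integration.integral_cong) (simp_all add: dyn algebra_simps)
  also have "\<dots> = (\<integral>\<omega>. indicator H \<omega> * (A *v x k \<omega>) $ i \<partial>M)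
      + (\<integral>\<omega>. indicator H \<omega> * (B *v u k \<omega>) $ i \<partial>M) + (\<integral>\<omega>. indicator H \<omega> * w k \<omega> $ i \<partial>M)"
    using i1 i2 i3 by simp
  also have "(\<integral>\<omega>. indicator H \<omega> * w k \<omega> $ i \<partial>M) = 0"
    by (rule integral_indicator_noise[OF H_Prim])
  also have "(\<integral>\<omega>. indicator H \<omega> * (A *v x k \<omega>) $ i \<partial>M)
      = (\<integral>\<omega>. indicator H \<omega> * (A *v cond_exp_vec M (Info_dl k) (x k) \<omega>) $ i \<partial>M)"
    by (rule H.integral_indicator_matrix_cond_exp_vec[OF H integrable_x_nth, symmetric])
  finally show ?thesis using i2 i4 by (simp add: distrib_left)
qed

lemma cond_exp_x_Suc_if_no_sample:
  "AE \<omega> in M. \<not> dl k \<omega> \<longrightarrow> cond_exp_vec M (Info (Suc k)) (x (Suc k)) \<omega>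
      = A *v cond_exp_vec M (Info_dl k) (x k) \<omega> + B *v u k \<omega>"
proof -
  interpret F: finite_measure_subalgebra M "Info (Suc k)" by (rule finite_measure_subalgebra_Info)
  interpret H: finite_measure_subalgebra M "Info_dl k" by (rule finite_measure_subalgebra_Info_dl)
  define E where "E = {\<omega> \<in> space M. \<not> dl k \<omega>}"
  define V where "V = (\<lambda>\<omega>. A *v cond_exp_vec M (Info_dl k) (x k) \<omega> + B *v u k \<omega>)"
  have [measurable]: "dl k \<in> measurable (Info (Suc k)) (count_space UNIV)"
    by (rule measurable_Info_SucI) (auto simp: gens_c_Suc)
  have "{\<omega> \<in> space (Info (Suc k)). \<not> dl k \<omega>} \<in> sets (Info (Suc k))" by measurable
  then have E: "E \<in> sets (Info (Suc k))" unfolding E_def by simp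
  have [measurable]: "u k \<in> borel_measurable (Info_dl k)"
      "cond_exp_vec M (Info_dl k) (x k) \<in> borel_measurable (Info_dl k)"
    by (rule u_Info_dl, rule borel_measurable_cond_exp_vec)
  have "V \<in> borel_measurable (Info_dl k)" unfolding V_def by measurable
  then have V_meas: "V \<in> borel_measurable (Info (Suc k))"
    using measurable_mono[of borel borel "Info_dl k" "Info (Suc k)"] sets_Info_dl_subset_Info_Suc by auto
  have V_int: "integrable M (\<lambda>\<omega>. V \<omega> $ i)" for i
    unfolding V_def vector_add_component
    by (intro Bochner_Integration.integrable_add integrable_matrix_vector_mult_nth
        H.integrable_cond_exp_vec_nth integrable_x_nth integrable_u_nth)
  have "AE \<omega> in M. \<omega> \<in> E \<longrightarrow> cond_exp_vec M (Info (Suc k)) (x (Suc k)) \<omega> = V \<omega>"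
  proof (rule F.cond_exp_vec_eq_on_event[OF E integrable_x_nth V_int V_meas refl])
    fix G i assume "G \<in> sets (Info (Suc k))"
    then have "G \<inter> E \<in> sets (Info_dl k)" using Info_Suc_Int_no_sample unfolding E_def by blast
    then show "(\<integral>\<omega>. indicator (G \<inter> E) \<omega> * x (Suc k) \<omega> $ i \<partial>M) = (\<integral>\<omega>. indicator (G \<inter> E) \<omega> * V \<omega> $ i \<partial>M)"
      unfolding V_def by (rule integral_indicator_x_Suc)
  qed
  then show ?thesis by (rule AE_mp[OF _ AE_I2]) (auto simp: E_def V_def)
qed

end

theorem lemma2:
  fixes M :: "'a measure"
    and A :: "real^'n^'n" and B :: "real^'m^'n"
    and W M0 :: "real^'n^'n" and m0 :: "real^'n"
    and N :: nat
    and x w :: "nat \<Rightarrow> 'a \<Rightarrow> real^'n"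
    and u :: "nat \<Rightarrow> 'a \<Rightarrow> real^'m"
    and tau :: "nat \<Rightarrow> 'a \<Rightarrow> nat"
    and dl :: "nat \<Rightarrow> 'a \<Rightarrow> bool"
    and xi :: "nat \<Rightarrow> 'a \<Rightarrow> real"
  assumes P: "prob_space M"
    and x0_gauss: "gaussian_vec M (x 0) m0 M0"
    and W_pd: "pd_mat W"
    and w_gauss: "\<And>k. gaussian_vec M (w k) 0 W"
    and tau_meas: "\<And>k. tau k \<in> measurable M (count_space UNIV)"
    and tau0: "\<And>\<omega>. \<omega> \<in> space M \<Longrightarrow> tau 0 \<omega> = 0"
    and xi_meas: "\<And>k. xi k \<in> borel_measurable M"
    and indep: "prob_space.indep_sets M
        (\<lambda>i. case i of PX0 \<Rightarrow> preimgs M (x 0) borel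
                     | PW k \<Rightarrow> preimgs M (w k) borel
                     | PTau k \<Rightarrow> preimgs M (tau k) (count_space UNIV)
                     | PXi k \<Rightarrow> preimgs M (xi k) borel) UNIV"
    and dyn: "\<And>k \<omega>. \<omega> \<in> space M \<Longrightarrow> x (Suc k) \<omega> = A *v x k \<omega> + B *v u k \<omega> + w k \<omega>"
    and ctrl: "\<And>k. u k \<in> borel_measurable (Ic M x tau dl u k)"
    and ctrl_L2: "\<And>k i. integrable M (\<lambda>\<omega>. (u k \<omega> $ i)\<^sup>2)"
    and trig: "\<And>k. dl k \<in> measurable
        (sigma (space M) (gens_e M x tau dl u k \<union> preimgs M (xi k) borel)) (count_space UNIV)"
  shows
    "(\<forall>k\<le>N.
        cond_exp_vec M (Ic M x tau dl u k) (x k) \<in> borel_measurable (Ic M x tau dl u k) \<and>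
        (\<forall>g \<in> borel_measurable (Ic M x tau dl u k).
           (\<integral>\<^sup>+\<omega>. ennreal ((norm (x k \<omega> - cond_exp_vec M (Ic M x tau dl u k) (x k) \<omega>))\<^sup>2) \<partial>M)
             \<le> (\<integral>\<^sup>+\<omega>. ennreal ((norm (x k \<omega> - g \<omega>))\<^sup>2) \<partial>M)))
   \<and> (AE \<omega> in M. cond_exp_vec M (Ic M x tau dl u 0) (x 0) \<omega> = m0)
   \<and> (\<forall>k\<le>N. AE \<omega> in M.
        (dl k \<omega> \<longrightarrow>
           cond_exp_vec M (Ic M x tau dl u (Suc k)) (x (Suc k)) \<omega> =
             mpow A (zeta_rv tau k \<omega> + 1) *v x (k - zeta_rv tau k \<omega>) \<omega>
             + (\<Sum>t\<in>{0..zeta_rv tau k \<omega>}. (mpow A t ** B) *v u (k - t) \<omega>)) \<and>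
        (\<not> dl k \<omega> \<longrightarrow>
           cond_exp_vec M (Ic M x tau dl u (Suc k)) (x (Suc k)) \<omega> =
             A *v cond_exp_vec M (Ic M x tau dl u k) (x k) \<omega> + B *v u k \<omega>
             + A *v (cond_exp_vec M (Ic_dl M x tau dl u k) (x k) \<omega>
                     - cond_exp_vec M (Ic M x tau dl u k) (x k) \<omega>)))"
proof -
  have x0: "square_integrable_vec M (x 0)" "\<And>i. (\<integral>\<omega>. x 0 \<omega> $ i \<partial>M) = m0 $ i"
    using gaussian_vec_moments[OF P x0_gauss] by auto
  have w: "\<And>k. square_integrable_vec M (w k)" "\<And>k i. (\<integral>\<omega>. w k \<omega> $ i \<partial>M) = 0"
    using gaussian_vec_moments[OF P w_gauss] by auto
  interpret event_triggered_loop M A B m0 x w u tau dl xi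
    by (rule event_triggered_loop.intro) (fact P x0 w indep dyn ctrl ctrl_L2 trig)+
  have least_squares:
    "(\<integral>\<^sup>+\<omega>. ennreal ((norm (x k \<omega> - cond_exp_vec M (Info k) (x k) \<omega>))\<^sup>2) \<partial>M)
       \<le> (\<integral>\<^sup>+\<omega>. ennreal ((norm (x k \<omega> - g \<omega>))\<^sup>2) \<partial>M)" if "g \<in> borel_measurable (Info k)" for k g
    using finite_measure_subalgebra.cond_exp_vec_least_squares[OF finite_measure_subalgebra_Info x_L2 that] .
  have no_sample: "AE \<omega> in M. \<not> dl k \<omega> \<longrightarrow> cond_exp_vec M (Info (Suc k)) (x (Suc k)) \<omega> =
      A *v cond_exp_vec M (Info k) (x k) \<omega> + B *v u k \<omega>
      + A *v (cond_exp_vec M (Info_dl k) (x k) \<omega> - cond_exp_vec M (Info k) (x k) \<omega>)" for k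
    using cond_exp_x_Suc_if_no_sample[of k] by (rule AE_mp[OF _ AE_I2]) (simp add: matrix_vector_mult_diff_distrib)
  show ?thesis
    using borel_measurable_cond_exp_vec least_squares cond_exp_x0
      AE_conjI[OF cond_exp_x_Suc_if_sample[unfolded x_known_def] no_sample]
    by blast
qed

end
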